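(* Let $\mathbb K$ be a field with $2\in\mathbb K^\times$, $A$ a unital commutative associative $\mathbb K$-algebra, $\mathfrak k$ a $\mathbb K$-Lie algebra and $\mathfrak g=A\otimes\mathfrak k$. The map $$\Phi:\mathrm{Alt}^2(\mathfrak g/\mathfrak g')_{1,3}\oplus\mathrm{Lin}(A,H^2(\mathfrak k))\to H^2(\mathfrak g),\quad(\omega,\phi)\mapsto[\omega\circ(q\times q)]+[f_\phi],$$ is a well-defined injective linear map, and its image consists of the classes of those 2-cocycles $f=f_1\circ p_1+f_2\circ p_2+f_3\circ p_3$ for which $f_1\circ p_1$ vanishes on $\mathfrak g\times\mathfrak g'$.
   Context: $\mathfrak g$ has bracket $[a\otimes x,a'\otimes x']=aa'\otimes[x,x']$, $ax=a\otimes x$, unit $\mathbf 1$; $\mathfrak k'=[\mathfrak k,\mathfrak k]$, $\mathfrak g'=A\otimes\mathfrak k'$, $\mathfrak g/\mathfrak g'\cong A\otimes(\mathfrak k/\mathfrak k')$, $q:\mathfrak g\to\mathfrak g/\mathfrak g'$ the quotient map. $H^2(\mathfrak g)$: $\mathbb K$-valued 2-cocycles on $\mathfrak g$ modulo coboundaries $(u,v)\mapsto-\ell([u,v])$; $Z^2(\mathfrak k),H^2(\mathfrak k)$ similarly for $\mathfrak k$. Alternating bilinear forms on $\mathfrak g$ are identified with linear forms on $\Lambda^2(\mathfrak g)$ via $f(u,v)=f(u\wedge v)$, where $v\wedge w=\tfrac12(v\otimes w-w\otimes v)$ and $v\vee w=\tfrac12(v\otimes w+w\otimes v)$. $I_A$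 is the kernel of multiplication $S^2(A)\to A$; $p_1(ax\wedge by)=a\wedge b\otimes x\vee y$, $p_2(ax\wedge by)=ab\otimes x\wedge y$, $p_3(ax\wedge by)=(a\vee b-ab\vee\mathbf 1)\otimes x\wedge y$ give an isomorphism $\Lambda^2(\mathfrak g)\cong(\Lambda^2(A)\otimes S^2(\mathfrak k))\oplus(A\otimes\Lambda^2(\mathfrak k))\oplus(I_A\otimes\Lambda^2(\mathfrak k))$, so each linear $f$ on $\Lambda^2(\mathfrak g)$ is uniquely $f_1\circ p_1+f_2\circ p_2+f_3\circ p_3$. $\mathrm{Alt}^2(\mathfrak g/\mathfrak g')_{1,3}$ is the space of alternating bilinear forms $\omega$ on $\mathfrak g/\mathfrak g'$ with $\omega(a\bar x,\mathbf 1\bar y)+\omega(\mathbf 1\bar x,a\bar y)=0$ for all $a\in A$, $\bar x,\bar y\in\mathfrak k/\mathfrak k'$. For $\phi\in\mathrm{Lin}(A,H^2(\mathfrak k))$, $f_\phi(ax,by):=\tilde\phi(ab)(x,y)$, where $\tilde\phi:A\to Z^2(\mathfrak k)$ is any linear lift of $\phi$. *)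

theory Defs
  imports Complex_Main
begin

definition bilin ::
  "('k::field \<Rightarrow> 'a::ab_group_add \<Rightarrow> 'a) \<Rightarrow> ('k \<Rightarrow> 'b::ab_group_add \<Rightarrow> 'b)
   \<Rightarrow> ('k \<Rightarrow> 'c::ab_group_add \<Rightarrow> 'c) \<Rightarrow> ('a \<Rightarrow> 'b \<Rightarrow> 'c) \<Rightarrow> bool" where
  "bilin s1 s2 s3 f \<longleftrightarrow>
     (\<forall>x. Vector_Spaces.linear s2 s3 (f x)) \<and> (\<forall>y. Vector_Spaces.linear s1 s3 (\<lambda>x. f x y))"

definition comm_algebra :: "('k::field \<Rightarrow> 'a::comm_ring_1 \<Rightarrow> 'a) \<Rightarrow> bool" where
  "comm_algebra sA \<longleftrightarrow> vector_space sA \<and> (\<forall>c x y. sA c (x * y) = sA c x * y)"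

definition lie_algebra :: "('k::field \<Rightarrow> 'b::ab_group_add \<Rightarrow> 'b) \<Rightarrow> ('b \<Rightarrow> 'b \<Rightarrow> 'b) \<Rightarrow> bool" where
  "lie_algebra s br \<longleftrightarrow> vector_space s \<and> bilin s s s br \<and> (\<forall>x. br x x = 0) \<and>
     (\<forall>x y z. br x (br y z) + br y (br z x) + br z (br x y) = 0)"

definition is_tensor_product ::
  "('k::field \<Rightarrow> 'a::ab_group_add \<Rightarrow> 'a) \<Rightarrow> ('k \<Rightarrow> 'b::ab_group_add \<Rightarrow> 'b)
   \<Rightarrow> ('k \<Rightarrow> 'g::ab_group_add \<Rightarrow> 'g) \<Rightarrow> ('a \<Rightarrow> 'b \<Rightarrow> 'g) \<Rightarrow> bool" where
  "is_tensor_product sA sK sG tm \<longleftrightarrow> vector_space sG \<and> bilin sA sK sG tm \<and>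
     (\<forall>\<beta>. bilin sA sK (*) \<beta> \<longrightarrow>
        (\<exists>!l. Vector_Spaces.linear sG (*) l \<and> (\<forall>a x. \<beta> a x = l (tm a x))))"

definition altform :: "('k::field \<Rightarrow> 'g::ab_group_add \<Rightarrow> 'g) \<Rightarrow> ('g \<Rightarrow> 'g \<Rightarrow> 'k) \<Rightarrow> bool" where
  "altform s f \<longleftrightarrow> bilin s s (*) f \<and> (\<forall>u. f u u = 0)"

definition Z2 :: "('k::field \<Rightarrow> 'g::ab_group_add \<Rightarrow> 'g) \<Rightarrow> ('g \<Rightarrow> 'g \<Rightarrow> 'g) \<Rightarrow> ('g \<Rightarrow> 'g \<Rightarrow> 'k) set" where
  "Z2 s br = {f. altform s f \<and> (\<forall>u v w. f (br u v) w + f (br v w) u + f (br w u) v = 0)}"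

definition B2 :: "('k::field \<Rightarrow> 'g::ab_group_add \<Rightarrow> 'g) \<Rightarrow> ('g \<Rightarrow> 'g \<Rightarrow> 'g) \<Rightarrow> ('g \<Rightarrow> 'g \<Rightarrow> 'k) set" where
  "B2 s br = {f. \<exists>l. Vector_Spaces.linear s (*) l \<and> f = (\<lambda>u v. - l (br u v))}"

definition cls :: "('g \<Rightarrow> 'g \<Rightarrow> 'k::field) set \<Rightarrow> ('g \<Rightarrow> 'g \<Rightarrow> 'k) \<Rightarrow> ('g \<Rightarrow> 'g \<Rightarrow> 'k) set" where
  "cls B f = {h. (\<lambda>u v. h u v - f u v) \<in> B}"

definition H2 :: "('k::field \<Rightarrow> 'g::ab_group_add \<Rightarrow> 'g) \<Rightarrow> ('g \<Rightarrow> 'g \<Rightarrow> 'g) \<Rightarrow> ('g \<Rightarrow> 'g \<Rightarrow> 'k) set set" where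
  "H2 s br = cls (B2 s br) ` Z2 s br"

definition hcomb :: "('g \<Rightarrow> 'g \<Rightarrow> 'k::field) set \<Rightarrow> 'k \<Rightarrow> ('g \<Rightarrow> 'g \<Rightarrow> 'k) set
     \<Rightarrow> ('g \<Rightarrow> 'g \<Rightarrow> 'k) set \<Rightarrow> ('g \<Rightarrow> 'g \<Rightarrow> 'k) set" where
  "hcomb B c X Y = cls B (\<lambda>u v. c * (SOME f. f \<in> X) u v + (SOME f. f \<in> Y) u v)"

definition derived :: "('k::field \<Rightarrow> 'b::ab_group_add \<Rightarrow> 'b) \<Rightarrow> ('b \<Rightarrow> 'b \<Rightarrow> 'b) \<Rightarrow> 'b set" where
  "derived sK bk = module.span sK {bk x y | x y. True}"

(* g' = A \<otimes> k', as the subspace of g spanned by the a y with y \<in> k' *)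
definition gprime :: "('k::field \<Rightarrow> 'b::ab_group_add \<Rightarrow> 'b) \<Rightarrow> ('b \<Rightarrow> 'b \<Rightarrow> 'b)
     \<Rightarrow> ('k \<Rightarrow> 'g::ab_group_add \<Rightarrow> 'g) \<Rightarrow> ('a \<Rightarrow> 'b \<Rightarrow> 'g) \<Rightarrow> 'g set" where
  "gprime sK bk sG tm = module.span sG {tm a y | a y. y \<in> derived sK bk}"

(* the quotient map q : g \<rightarrow> g/g', elements of g/g' being cosets *)
definition qmap :: "'g::ab_group_add set \<Rightarrow> 'g \<Rightarrow> 'g set" where
  "qmap P u = {u + v | v. v \<in> P}"

(* Alt^2(g/g')_{1,3}: alternating bilinear forms on g/g' (= range of q), set to 0 outside g/g' *)
definition Alt13 ::
  "('k::field \<Rightarrow> 'b::ab_group_add \<Rightarrow> 'b) \<Rightarrow> ('b \<Rightarrow> 'b \<Rightarrow> 'b) \<Rightarrow> ('k \<Rightarrow> 'g::ab_group_add \<Rightarrow> 'g)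
   \<Rightarrow> ('a::comm_ring_1 \<Rightarrow> 'b \<Rightarrow> 'g) \<Rightarrow> ('g set \<Rightarrow> 'g set \<Rightarrow> 'k) set" where
  "Alt13 sK bk sG tm = (let q = qmap (gprime sK bk sG tm) in
     {\<omega>. (\<forall>X Y. X \<notin> range q \<or> Y \<notin> range q \<longrightarrow> \<omega> X Y = 0) \<and>
         (\<forall>c u u' w. \<omega> (q (sG c u + u')) (q w) = c * \<omega> (q u) (q w) + \<omega> (q u') (q w)) \<and>
         (\<forall>c u u' w. \<omega> (q w) (q (sG c u + u')) = c * \<omega> (q w) (q u) + \<omega> (q w) (q u')) \<and>
         (\<forall>u. \<omega> (q u) (q u) = 0) \<and>
         (\<forall>a x y. \<omega> (q (tm a x)) (q (tm 1 y)) + \<omega> (q (tm 1 x)) (q (tm a y)) = 0)})"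

definition LinAH2 :: "('k::field \<Rightarrow> 'a::ab_group_add \<Rightarrow> 'a) \<Rightarrow> ('k \<Rightarrow> 'b::ab_group_add \<Rightarrow> 'b)
   \<Rightarrow> ('b \<Rightarrow> 'b \<Rightarrow> 'b) \<Rightarrow> ('a \<Rightarrow> ('b \<Rightarrow> 'b \<Rightarrow> 'k) set) set" where
  "LinAH2 sA sK bk = {\<phi>. (\<forall>a. \<phi> a \<in> H2 sK bk) \<and>
     (\<forall>c a a'. \<phi> (sA c a + a') = hcomb (B2 sK bk) c (\<phi> a) (\<phi> a'))}"

definition is_lift :: "('k::field \<Rightarrow> 'a::ab_group_add \<Rightarrow> 'a) \<Rightarrow> ('k \<Rightarrow> 'b::ab_group_add \<Rightarrow> 'b)
   \<Rightarrow> ('b \<Rightarrow> 'b \<Rightarrow> 'b) \<Rightarrow> ('a \<Rightarrow> ('b \<Rightarrow> 'b \<Rightarrow> 'k) set) \<Rightarrow> ('a \<Rightarrow> 'b \<Rightarrow> 'b \<Rightarrow> 'k) \<Rightarrow> bool" where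
  "is_lift sA sK bk \<phi> \<psi> \<longleftrightarrow> (\<forall>a. \<psi> a \<in> Z2 sK bk \<and> \<psi> a \<in> \<phi> a) \<and>
     (\<forall>c a a'. \<psi> (sA c a + a') = (\<lambda>x y. c * \<psi> a x y + \<psi> a' x y))"

definition f_of :: "('k::field \<Rightarrow> 'g::ab_group_add \<Rightarrow> 'g) \<Rightarrow> ('a::comm_ring_1 \<Rightarrow> 'b \<Rightarrow> 'g)
   \<Rightarrow> ('a \<Rightarrow> 'b \<Rightarrow> 'b \<Rightarrow> 'k) \<Rightarrow> ('g \<Rightarrow> 'g \<Rightarrow> 'k)" where
  "f_of sG tm \<psi> = (SOME F. bilin sG sG (*) F \<and> (\<forall>a x b y. F (tm a x) (tm b y) = \<psi> (a * b) x y))"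

definition Phi ::
  "('k::field \<Rightarrow> 'a::comm_ring_1 \<Rightarrow> 'a) \<Rightarrow> ('k \<Rightarrow> 'b::ab_group_add \<Rightarrow> 'b) \<Rightarrow> ('b \<Rightarrow> 'b \<Rightarrow> 'b)
   \<Rightarrow> ('k \<Rightarrow> 'g::ab_group_add \<Rightarrow> 'g) \<Rightarrow> ('g \<Rightarrow> 'g \<Rightarrow> 'g) \<Rightarrow> ('a \<Rightarrow> 'b \<Rightarrow> 'g)
   \<Rightarrow> ('g set \<Rightarrow> 'g set \<Rightarrow> 'k) \<times> ('a \<Rightarrow> ('b \<Rightarrow> 'b \<Rightarrow> 'k) set) \<Rightarrow> ('g \<Rightarrow> 'g \<Rightarrow> 'k) set" where
  "Phi sA sK bk sG bg tm = (\<lambda>(\<omega>, \<phi>). (let q = qmap (gprime sK bk sG tm) in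
     cls (B2 sG bg) (\<lambda>u v. \<omega> (q u) (q v) + f_of sG tm (SOME \<psi>. is_lift sA sK bk \<phi> \<psi>) u v)))"

definition dcomb :: "('k::field \<Rightarrow> 'b::ab_group_add \<Rightarrow> 'b) \<Rightarrow> ('b \<Rightarrow> 'b \<Rightarrow> 'b) \<Rightarrow> 'k
   \<Rightarrow> ('g set \<Rightarrow> 'g set \<Rightarrow> 'k) \<times> ('a \<Rightarrow> ('b \<Rightarrow> 'b \<Rightarrow> 'k) set)
   \<Rightarrow> ('g set \<Rightarrow> 'g set \<Rightarrow> 'k) \<times> ('a \<Rightarrow> ('b \<Rightarrow> 'b \<Rightarrow> 'k) set)
   \<Rightarrow> ('g set \<Rightarrow> 'g set \<Rightarrow> 'k) \<times> ('a \<Rightarrow> ('b \<Rightarrow> 'b \<Rightarrow> 'k) set)" where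
  "dcomb sK bk c p p' = ((\<lambda>X Y. c * fst p X Y + fst p' X Y),
                          (\<lambda>a. hcomb (B2 sK bk) c (snd p a) (snd p' a)))"

(* the three types of alternating forms on g: those of the form f_i \<circ> p_i *)
definition type1 :: "('k::field \<Rightarrow> 'g::ab_group_add \<Rightarrow> 'g) \<Rightarrow> ('a \<Rightarrow> 'b \<Rightarrow> 'g) \<Rightarrow> ('g \<Rightarrow> 'g \<Rightarrow> 'k) \<Rightarrow> bool" where
  "type1 sG tm F \<longleftrightarrow> altform sG F \<and>
     (\<forall>a b x y. F (tm a x) (tm b y) = - F (tm b x) (tm a y) \<and> F (tm a x) (tm b y) = F (tm a y) (tm b x))"

definition type2 :: "('k::field \<Rightarrow> 'a::comm_ring_1 \<Rightarrow> 'a) \<Rightarrow> ('k \<Rightarrow> 'b::ab_group_add \<Rightarrow> 'b)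
   \<Rightarrow> ('k \<Rightarrow> 'g::ab_group_add \<Rightarrow> 'g) \<Rightarrow> ('a \<Rightarrow> 'b \<Rightarrow> 'g) \<Rightarrow> ('g \<Rightarrow> 'g \<Rightarrow> 'k) \<Rightarrow> bool" where
  "type2 sA sK sG tm F \<longleftrightarrow> altform sG F \<and>
     (\<exists>h. (\<forall>a. altform sK (h a)) \<and> (\<forall>x y. Vector_Spaces.linear sA (*) (\<lambda>a. h a x y)) \<and>
          (\<forall>a b x y. F (tm a x) (tm b y) = h (a * b) x y))"

definition type3 :: "('k::field \<Rightarrow> 'a::comm_ring_1 \<Rightarrow> 'a) \<Rightarrow> ('k \<Rightarrow> 'b::ab_group_add \<Rightarrow> 'b)
   \<Rightarrow> ('k \<Rightarrow> 'g::ab_group_add \<Rightarrow> 'g) \<Rightarrow> ('a \<Rightarrow> 'b \<Rightarrow> 'g) \<Rightarrow> ('g \<Rightarrow> 'g \<Rightarrow> 'k) \<Rightarrow> bool" where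
  "type3 sA sK sG tm F \<longleftrightarrow> altform sG F \<and>
     (\<exists>L. (\<forall>a b. altform sK (L a b)) \<and> (\<forall>x y. bilin sA sA (*) (\<lambda>a b. L a b x y)) \<and>
          (\<forall>a b. L a b = L b a) \<and>
          (\<forall>a b x y. F (tm a x) (tm b y) = L a b x y - L (a * b) 1 x y))"

definition comp1 :: "('k::field \<Rightarrow> 'a::comm_ring_1 \<Rightarrow> 'a) \<Rightarrow> ('k \<Rightarrow> 'b::ab_group_add \<Rightarrow> 'b)
   \<Rightarrow> ('k \<Rightarrow> 'g::ab_group_add \<Rightarrow> 'g) \<Rightarrow> ('a \<Rightarrow> 'b \<Rightarrow> 'g) \<Rightarrow> ('g \<Rightarrow> 'g \<Rightarrow> 'k) \<Rightarrow> ('g \<Rightarrow> 'g \<Rightarrow> 'k)" where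
  "comp1 sA sK sG tm f = (THE F1. type1 sG tm F1 \<and>
     (\<exists>F2 F3. type2 sA sK sG tm F2 \<and> type3 sA sK sG tm F3 \<and>
        f = (\<lambda>u v. F1 u v + F2 u v + F3 u v)))"

end

(* Linear lifts psi : A -> Z^2(k) of phi exist because cocycle representatives can be chosen
   on a basis of A; two lifts differ by a linear family of coboundaries -l_a o [.,.], and the
   l_a glue to a linear form on g = A (x) k, so the class of f_psi does not depend on the lift.

   On generators an alternating form f on g splits by its symmetry in (a,b) and in (x,y) as
   f_1 p_1 + f_2 p_2 + f_3 p_3, with 2 f_1 p_1 (ax, by) = f (ax, by) + f (ay, bx).  For
   f = omega (q x q) + f_psi this vanishes as soon as one argument lies in g', because omega
   kills g' and psi (ab) is alternating.  Conversely, if f_1 p_1 vanishes on g x g', the cocycle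
   identity on generators shows that f (ax, b [y,z]) depends on a, b only through ab; hence
   h c (x,y) = (f (cx, 1y) - f (cy, 1x)) / 2 is a linear family of 2-cocycles on k, and f - f_h
   vanishes on g x g', so it descends to a form omega on g/g' with the (1,3)-property.

   Injectivity: if omega (q x q) + f_psi = -Lambda o [.,.], adding its values at (ax, 1y) and
   (1x, ay) cancels omega by the (1,3)-property, so psi a = -Lambda (a [.,.]) is a coboundary,
   and then omega vanishes on generators. *)

theory Submission
  imports Defs "HOL-Library.Function_Algebras"
begin

section \<open>Linear and bilinear forms\<close>

definition linear_form :: "('k::field \<Rightarrow> 'v::ab_group_add \<Rightarrow> 'v) \<Rightarrow> ('v \<Rightarrow> 'k) \<Rightarrow> bool" where
  "linear_form s l \<longleftrightarrow> (\<forall>c u v. l (s c u + v) = c * l u + l v)"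

definition bilinear_form :: "('k::field \<Rightarrow> 'v::ab_group_add \<Rightarrow> 'v) \<Rightarrow> ('v \<Rightarrow> 'v \<Rightarrow> 'k) \<Rightarrow> bool" where
  "bilinear_form s F \<longleftrightarrow> (\<forall>v. linear_form s (\<lambda>u. F u v)) \<and> (\<forall>u. linear_form s (F u))"

lemma vector_space_field_mult: "vector_space ((*) :: 'k::field \<Rightarrow> 'k \<Rightarrow> 'k)"
  unfolding vector_space_def by (auto simp: algebra_simps)

lemma linear_iff_lincomb:
  assumes "vector_space s1" "vector_space s2"
  shows "Vector_Spaces.linear s1 s2 l \<longleftrightarrow> (\<forall>c u v. l (s1 c u + v) = s2 c (l u) + l v)"
proof
  assume "Vector_Spaces.linear s1 s2 l"
  then show "\<forall>c u v. l (s1 c u + v) = s2 c (l u) + l v"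
    unfolding Vector_Spaces.linear_iff by simp
next
  interpret v1: vector_space s1 by fact
  interpret v2: vector_space s2 by fact
  assume h: "\<forall>c u v. l (s1 c u + v) = s2 c (l u) + l v"
  have "l 0 = 0" using h[rule_format, of "-1" 0 0] by simp
  then show "Vector_Spaces.linear s1 s2 l" unfolding Vector_Spaces.linear_iff
    using h[rule_format, of 1] h[rule_format, of _ _ 0] assms by simp
qed

lemma linear_iff_linear_form:
  "vector_space s \<Longrightarrow> Vector_Spaces.linear s (*) l \<longleftrightarrow> linear_form s l"
  by (simp add: linear_iff_lincomb vector_space_field_mult linear_form_def)

lemma bilin_iff_linear_forms:
  "vector_space s1 \<Longrightarrow> vector_space s2 \<Longrightarrow>
    bilin s1 s2 (*) F \<longleftrightarrow> (\<forall>y. linear_form s1 (\<lambda>x. F x y)) \<and> (\<forall>x. linear_form s2 (F x))"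
  by (auto simp: bilin_def linear_iff_linear_form)

lemma bilin_iff_bilinear_form: "vector_space s \<Longrightarrow> bilin s s (*) F \<longleftrightarrow> bilinear_form s F"
  by (simp add: bilin_iff_linear_forms bilinear_form_def)

lemma linear_formD: "linear_form s l \<Longrightarrow> l (s c u + v) = c * l u + l v"
  unfolding linear_form_def by blast

lemma linear_form_zero: "linear_form s (\<lambda>u. 0)"
  unfolding linear_form_def by simp

lemma linear_form_lincomb:
  "linear_form s f \<Longrightarrow> linear_form s g \<Longrightarrow> linear_form s (\<lambda>u. d * f u + e * g u)"
  unfolding linear_form_def by (simp add: algebra_simps)

lemma linear_form_diff:
  assumes "vector_space s" "linear_form s l"
  shows "l (u - v) = l u - l v"
proof -
  interpret vector_space s by fact
  have e: "u - v = s (-1) v + u" by (simp add: scale_minus_left)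
  show ?thesis unfolding e linear_formD[OF assms(2)] by simp
qed

lemma bilinear_formD:
  assumes "bilinear_form s F"
  shows bilinear_form_left: "F (s c u + u') v = c * F u v + F u' v"
    and bilinear_form_right: "F u (s c v + v') = c * F u v + F u v'"
  using assms unfolding bilinear_form_def linear_form_def by blast+

lemma bilinear_form_linear_left: "bilinear_form s F \<Longrightarrow> linear_form s (\<lambda>u. F u v)"
  and bilinear_form_linear_right: "bilinear_form s F \<Longrightarrow> linear_form s (F u)"
  unfolding bilinear_form_def by blast+

lemma bilinear_form_zero: "bilinear_form s (\<lambda>u v. 0)"
  unfolding bilinear_form_def by (simp add: linear_form_zero)

lemma bilinear_form_lincomb:
  "bilinear_form s F \<Longrightarrow> bilinear_form s F' \<Longrightarrow> bilinear_form s (\<lambda>u v. d * F u v + e * F' u v)"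
  unfolding bilinear_form_def by (simp add: linear_form_lincomb)

lemma bilinear_form_scale: "bilinear_form s F \<Longrightarrow> bilinear_form s (\<lambda>u v. d * F u v)"
  using bilinear_form_lincomb[OF _ bilinear_form_zero, of s F d 0] by simp

lemma bilinear_form_swap: "bilinear_form s F \<Longrightarrow> bilinear_form s (\<lambda>u v. d * F v u)"
  unfolding bilinear_form_def linear_form_def by (simp add: algebra_simps)

lemma altform_bilinear_form: "vector_space s \<Longrightarrow> altform s f \<Longrightarrow> bilinear_form s f"
  by (simp add: altform_def bilin_iff_bilinear_form)

lemma altform_skew:
  assumes s: "vector_space s" and f: "altform s f"
  shows "f x y = - f y x"
proof -
  interpret vector_space s by fact
  note F = altform_bilinear_form[OF s f]
  have "0 = f (x + y) (x + y)" using f unfolding altform_def by simp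
  also have "\<dots> = f x x + f x y + f y x + f y y"
    using bilinear_form_left[OF F, of 1 x y] bilinear_form_right[OF F, of _ 1 x y] by simp
  finally show ?thesis using f unfolding altform_def by (simp add: eq_neg_iff_add_eq_0)
qed

definition scale_fun :: "('k \<Rightarrow> 'v \<Rightarrow> 'v) \<Rightarrow> 'k \<Rightarrow> ('x \<Rightarrow> 'v) \<Rightarrow> 'x \<Rightarrow> 'v" where
  "scale_fun s c f = (\<lambda>x. s c (f x))"

lemma vector_space_scale_fun:
  fixes s :: "'k::field \<Rightarrow> 'v::ab_group_add \<Rightarrow> 'v"
  assumes "vector_space s"
  shows "vector_space (scale_fun s :: 'k \<Rightarrow> ('x \<Rightarrow> 'v) \<Rightarrow> 'x \<Rightarrow> 'v)"
  using assms unfolding vector_space_def scale_fun_def by (simp add: fun_eq_iff)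

lemma linear_choice:
  fixes sA :: "'k::field \<Rightarrow> 'a::ab_group_add \<Rightarrow> 'a" and sV :: "'k \<Rightarrow> 'v::ab_group_add \<Rightarrow> 'v"
  assumes vA: "vector_space sA" and vV: "vector_space sV"
    and ex: "\<And>a. \<exists>v. R a v"
    and closed: "\<And>c a a' v v'. R a v \<Longrightarrow> R a' v' \<Longrightarrow> R (sA c a + a') (sV c v + v')"
  shows "\<exists>\<sigma>. (\<forall>c a a'. \<sigma> (sA c a + a') = sV c (\<sigma> a) + \<sigma> a') \<and> (\<forall>a. R a (\<sigma> a))"
proof -
  interpret vector_space_pair sA sV using vA vV by (simp add: vector_space_pair_def)
  have R0: "R 0 0"
  proof -
    obtain v where "R 0 v" using ex by blast
    from closed[OF this this, of "-1"] show ?thesis by simp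
  qed
  define B where "B = vs1.extend_basis {}"
  have iB: "vs1.independent B"
    unfolding B_def by (rule vs1.independent_extend_basis[OF vs1.independent_empty])
  have sB: "vs1.span B = UNIV"
    unfolding B_def by (rule vs1.span_extend_basis[OF vs1.independent_empty])
  define \<sigma> where "\<sigma> = construct B (\<lambda>e. SOME v. R e v)"
  have lin: "Vector_Spaces.linear sA sV \<sigma>" unfolding \<sigma>_def by (rule linear_construct[OF iB])
  then have lincomb: "\<sigma> (sA c a + a') = sV c (\<sigma> a) + \<sigma> a'" for c a a'
    using linear_iff_lincomb[OF vA vV] by blast
  have "R a (\<sigma> a)" for a
  proof -
    have "a \<in> vs1.span B" using sB by simp
    then show ?thesis
    proof (induct rule: vs1.span_induct_alt)
      case base
      then show ?case using R0 linear_0[OF lin] by simp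
    next
      case (step c x y)
      have "\<sigma> x = (SOME v. R x v)" unfolding \<sigma>_def using construct_basis[OF iB step(1)] by simp
      then have "R x (\<sigma> x)" using someI_ex[OF ex[of x]] by simp
      then show ?case using closed[OF _ step(2)] lincomb by simp
    qed
  qed
  then show ?thesis using lincomb by blast
qed

section \<open>Forms modulo a subspace\<close>

definition form_subspace :: "('g \<Rightarrow> 'g \<Rightarrow> 'k::field) set \<Rightarrow> bool" where
  "form_subspace B \<longleftrightarrow> (\<lambda>u v. 0) \<in> B \<and>
     (\<forall>c f g. f \<in> B \<longrightarrow> g \<in> B \<longrightarrow> (\<lambda>u v. c * f u v + g u v) \<in> B)"

lemma form_subspace_zero: "form_subspace B \<Longrightarrow> (\<lambda>u v. 0) \<in> B"
  unfolding form_subspace_def by blast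

lemma form_subspace_lincomb:
  "form_subspace B \<Longrightarrow> f \<in> B \<Longrightarrow> g \<in> B \<Longrightarrow> (\<lambda>u v. c * f u v + g u v) \<in> B"
  unfolding form_subspace_def by blast

lemma form_subspace_diff:
  "form_subspace B \<Longrightarrow> f \<in> B \<Longrightarrow> g \<in> B \<Longrightarrow> (\<lambda>u v. f u v - g u v) \<in> B"
  using form_subspace_lincomb[of B g f "-1"] by simp

lemma mem_cls_iff: "h \<in> cls B f \<longleftrightarrow> (\<lambda>u v. h u v - f u v) \<in> B"
  unfolding cls_def by simp

lemma mem_cls_self: "form_subspace B \<Longrightarrow> f \<in> cls B f"
  unfolding cls_def using form_subspace_zero by simp

lemma cls_eqI:
  assumes B: "form_subspace B" and d: "(\<lambda>u v. f u v - g u v) \<in> B"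
  shows "cls B f = cls B g"
proof -
  have "(\<lambda>u v. h u v - f u v) \<in> B \<longleftrightarrow> (\<lambda>u v. h u v - g u v) \<in> B" for h
  proof
    assume "(\<lambda>u v. h u v - f u v) \<in> B"
    from form_subspace_lincomb[OF B this d, of 1] show "(\<lambda>u v. h u v - g u v) \<in> B" by simp
  next
    assume "(\<lambda>u v. h u v - g u v) \<in> B"
    from form_subspace_diff[OF B this d] show "(\<lambda>u v. h u v - f u v) \<in> B" by simp
  qed
  then show ?thesis unfolding cls_def by blast
qed

lemma cls_eqD: "form_subspace B \<Longrightarrow> cls B f = cls B g \<Longrightarrow> (\<lambda>u v. f u v - g u v) \<in> B"
  using mem_cls_self[of B f] unfolding cls_def by blast

lemma cls_eq_cls_of_mem: "form_subspace B \<Longrightarrow> h \<in> cls B f \<Longrightarrow> cls B f = cls B h"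
  by (metis cls_eqD cls_eqI mem_cls_iff mem_cls_self)

lemma hcomb_cls:
  assumes B: "form_subspace B"
  shows "hcomb B c (cls B f) (cls B g) = cls B (\<lambda>u v. c * f u v + g u v)"
proof -
  define f' where "f' = (SOME h. h \<in> cls B f)"
  define g' where "g' = (SOME h. h \<in> cls B g)"
  have "f' \<in> cls B f" unfolding f'_def by (rule someI[of _ f]) (rule mem_cls_self[OF B])
  moreover have "g' \<in> cls B g" unfolding g'_def by (rule someI[of _ g]) (rule mem_cls_self[OF B])
  ultimately have "(\<lambda>u v. c * (f' u v - f u v) + (g' u v - g u v)) \<in> B"
    unfolding mem_cls_iff by (rule form_subspace_lincomb[OF B])
  then have "(\<lambda>u v. (c * f' u v + g' u v) - (c * f u v + g u v)) \<in> B"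
    by (simp add: algebra_simps)
  then show ?thesis unfolding hcomb_def f'_def[symmetric] g'_def[symmetric] by (rule cls_eqI[OF B])
qed

lemma form_subspace_B2:
  assumes s: "vector_space s"
  shows "form_subspace (B2 s br)"
  unfolding form_subspace_def
proof (intro conjI allI impI)
  show "(\<lambda>u v. 0) \<in> B2 s br"
    unfolding B2_def using linear_form_zero linear_iff_linear_form[OF s] by force
next
  fix c f g assume "f \<in> B2 s br" "g \<in> B2 s br"
  then obtain l l' where l: "linear_form s l" "f = (\<lambda>u v. - l (br u v))"
    and l': "linear_form s l'" "g = (\<lambda>u v. - l' (br u v))"
    unfolding B2_def linear_iff_linear_form[OF s] by blast
  have "linear_form s (\<lambda>z. c * l z + 1 * l' z)" by (rule linear_form_lincomb[OF l(1) l'(1)])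
  then show "(\<lambda>u v. c * f u v + g u v) \<in> B2 s br"
    unfolding B2_def l(2) l'(2) linear_iff_linear_form[OF s]
    by (auto intro!: exI[of _ "\<lambda>z. c * l z + l' z"] simp: algebra_simps)
qed

lemma qmap_eq_iff:
  assumes s: "module s" and P: "module.subspace s P"
  shows "qmap P u = qmap P u' \<longleftrightarrow> u - u' \<in> P"
proof
  assume "qmap P u = qmap P u'"
  moreover have "u \<in> qmap P u"
    unfolding qmap_def using module.subspace_0[OF s P] by force
  ultimately obtain v where "v \<in> P" "u = u' + v" unfolding qmap_def by blast
  then show "u - u' \<in> P" by simp
next
  assume d: "u - u' \<in> P"
  have "u + v \<in> qmap P u'" if "v \<in> P" for v
    using module.subspace_add[OF s P d that] unfolding qmap_def by (auto intro!: exI[of _ "u - u' + v"])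
  moreover have "u' + v \<in> qmap P u" if "v \<in> P" for v
    using module.subspace_diff[OF s P that d] unfolding qmap_def by (auto intro!: exI[of _ "v - (u - u')"])
  ultimately show "qmap P u = qmap P u'" unfolding qmap_def by blast
qed

lemma H2E:
  assumes "X \<in> H2 s br"
  obtains z where "z \<in> Z2 s br" "X = cls (B2 s br) z"
  using assms unfolding H2_def by blast

lemma Z2_lincomb:
  assumes s: "vector_space s" and f: "f \<in> Z2 s br" and g: "g \<in> Z2 s br"
  shows "(\<lambda>u v. c * f u v + g u v) \<in> Z2 s br"
proof -
  have "bilinear_form s (\<lambda>u v. c * f u v + 1 * g u v)"
    using f g bilinear_form_lincomb unfolding Z2_def altform_def bilin_iff_bilinear_form[OF s]
    by blast
  then have "altform s (\<lambda>u v. c * f u v + g u v)"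
    using f g unfolding Z2_def altform_def bilin_iff_bilinear_form[OF s] by simp
  moreover have "c * f (br u v) w + g (br u v) w + (c * f (br v w) u + g (br v w) u)
      + (c * f (br w u) v + g (br w u) v) = 0" for u v w
  proof -
    have "c * f (br u v) w + g (br u v) w + (c * f (br v w) u + g (br v w) u)
        + (c * f (br w u) v + g (br w u) v)
      = c * (f (br u v) w + f (br v w) u + f (br w u) v)
        + (g (br u v) w + g (br v w) u + g (br w u) v)"
      by (simp add: algebra_simps)
    also have "\<dots> = 0" using f g unfolding Z2_def by simp
    finally show ?thesis .
  qed
  ultimately show ?thesis unfolding Z2_def by simp
qed

section \<open>Forms on the current algebra \<open>A \<otimes> k\<close>\<close>

locale current_algebra =
  fixes sA :: "'k::field \<Rightarrow> 'a::comm_ring_1 \<Rightarrow> 'a"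
    and sK :: "'k \<Rightarrow> 'b::ab_group_add \<Rightarrow> 'b" and bk :: "'b \<Rightarrow> 'b \<Rightarrow> 'b"
    and sG :: "'k \<Rightarrow> 'g::ab_group_add \<Rightarrow> 'g" and bg :: "'g \<Rightarrow> 'g \<Rightarrow> 'g"
    and tm :: "'a \<Rightarrow> 'b \<Rightarrow> 'g"
  assumes two: "(2::'k) \<noteq> 0"
    and A: "comm_algebra sA"
    and K: "lie_algebra sK bk"
    and G: "is_tensor_product sA sK sG tm"
    and bg_bilin: "bilin sG sG sG bg"
    and bg_tm: "\<And>a x b y. bg (tm a x) (tm b y) = tm (a * b) (bk x y)"
begin

abbreviation "gp \<equiv> gprime sK bk sG tm"
abbreviation "q \<equiv> qmap gp"
abbreviation "fof \<equiv> f_of sG tm"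
abbreviation "Phi_domain \<equiv> {(\<omega>, \<phi>). \<omega> \<in> Alt13 sK bk sG tm \<and> \<phi> \<in> LinAH2 sA sK bk}"

lemma vector_space_A: "vector_space sA" using A unfolding comm_algebra_def by simp
lemma vector_space_K: "vector_space sK" using K unfolding lie_algebra_def by simp
lemma vector_space_G: "vector_space sG" using G unfolding is_tensor_product_def by simp

lemma double_cancel: "(2::'k) * x = 2 * y \<Longrightarrow> x = y"
  using two by simp

lemma double_half: "(2::'k) * (inverse 2 * x) = x"
  using two by (simp add: mult.assoc[symmetric])

lemma tm_bilin: "bilin sA sK sG tm" using G unfolding is_tensor_product_def by simp

lemma tm_lincomb_left [simp]: "tm (sA c a + a') x = sG c (tm a x) + tm a' x"
  using tm_bilin unfolding bilin_def linear_iff_lincomb[OF vector_space_A vector_space_G] by simp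
lemma tm_lincomb_right [simp]: "tm a (sK c x + x') = sG c (tm a x) + tm a x'"
  using tm_bilin unfolding bilin_def linear_iff_lincomb[OF vector_space_K vector_space_G] by simp
lemma bg_lincomb_left [simp]: "bg (sG c u + u') v = sG c (bg u v) + bg u' v"
  using bg_bilin unfolding bilin_def linear_iff_lincomb[OF vector_space_G vector_space_G] by simp
lemma bg_lincomb_right [simp]: "bg u (sG c v + v') = sG c (bg u v) + bg u v'"
  using bg_bilin unfolding bilin_def linear_iff_lincomb[OF vector_space_G vector_space_G] by simp
lemma mult_lincomb_left [simp]: "(sA c a + a') * b = sA c (a * b) + a' * b"
  using A unfolding comm_algebra_def by (simp add: distrib_right)
lemma mult_lincomb_right [simp]: "b * (sA c a + a') = sA c (b * a) + b * a'"
  by (simp only: mult.commute[of b] mult_lincomb_left)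

lemma bilin_AK_iff:
  "bilin sA sK (*) F \<longleftrightarrow> (\<forall>x. linear_form sA (\<lambda>a. F a x)) \<and> (\<forall>a. linear_form sK (F a))"
  by (rule bilin_iff_linear_forms[OF vector_space_A vector_space_K])

lemma tensor_linear_form_exists:
  assumes "bilin sA sK (*) \<beta>"
  shows "\<exists>l. linear_form sG l \<and> (\<forall>a x. l (tm a x) = \<beta> a x)"
proof -
  from G assms have "\<exists>!l. Vector_Spaces.linear sG (*) l \<and> (\<forall>a x. \<beta> a x = l (tm a x))"
    unfolding is_tensor_product_def by blast
  then show ?thesis unfolding linear_iff_linear_form[OF vector_space_G] by metis
qed

lemma tensor_linear_form_eq_zero:
  assumes l: "linear_form sG l" and z: "\<And>a x. l (tm a x) = 0"
  shows "l u = 0"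
proof -
  have "bilin sA sK (*) (\<lambda>a x. 0::'k)"
    unfolding bilin_AK_iff by (simp add: linear_form_zero)
  with G have "\<exists>!l. Vector_Spaces.linear sG (*) l \<and> (\<forall>a x. (0::'k) = l (tm a x))"
    unfolding is_tensor_product_def by blast
  moreover have "Vector_Spaces.linear sG (*) l \<and> (\<forall>a x. (0::'k) = l (tm a x))"
    using l z linear_iff_linear_form[OF vector_space_G] by simp
  moreover have "Vector_Spaces.linear sG (*) (\<lambda>u. 0::'k) \<and> (\<forall>a x. (0::'k) = (\<lambda>u. 0) (tm a x))"
    using linear_form_zero linear_iff_linear_form[OF vector_space_G] by simp
  ultimately have "l = (\<lambda>u. 0)" by blast
  then show ?thesis by simp
qed

lemma tensor_linear_form_eq:
  assumes "linear_form sG f" "linear_form sG g" "\<And>a x. f (tm a x) = g (tm a x)"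
  shows "f u = g u"
proof -
  have "1 * f u + (-1) * g u = 0"
    by (rule tensor_linear_form_eq_zero[OF linear_form_lincomb[OF assms(1,2)]]) (simp add: assms(3))
  then show ?thesis by simp
qed

lemma tensor_bilinear_form_eq:
  assumes F: "bilinear_form sG F" and F': "bilinear_form sG F'"
    and e: "\<And>a x b y. F (tm a x) (tm b y) = F' (tm a x) (tm b y)"
  shows "F u v = F' u v"
proof -
  have "F (tm a x) v = F' (tm a x) v" for a x
    by (rule tensor_linear_form_eq[OF bilinear_form_linear_right[OF F]
          bilinear_form_linear_right[OF F'] e])
  then show ?thesis
    by (rule tensor_linear_form_eq[OF bilinear_form_linear_left[OF F]
          bilinear_form_linear_left[OF F']])
qed

lemma tensor_bilinear_form_exists:
  assumes \<beta>1: "\<And>b y. bilin sA sK (*) (\<lambda>a x. \<beta> a x b y)"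
    and \<beta>2: "\<And>a x. bilin sA sK (*) (\<lambda>b y. \<beta> a x b y)"
  shows "\<exists>F. bilinear_form sG F \<and> (\<forall>a x b y. F (tm a x) (tm b y) = \<beta> a x b y)"
proof -
  have \<beta>_lin: "\<beta> a x (sA c b + b') y = c * \<beta> a x b y + 1 * \<beta> a x b' y"
    "\<beta> a x b (sK c y + y') = c * \<beta> a x b y + 1 * \<beta> a x b y'" for a x b b' y y' c
    using \<beta>2[of a x] unfolding bilin_AK_iff linear_form_def by simp_all
  have "\<forall>b y. \<exists>l. linear_form sG l \<and> (\<forall>a x. l (tm a x) = \<beta> a x b y)"
    using tensor_linear_form_exists[OF \<beta>1] by metis
  then obtain l where l: "\<And>b y. linear_form sG (l b y)" "\<And>a x b y. l b y (tm a x) = \<beta> a x b y"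
    by metis
  have "bilin sA sK (*) (\<lambda>b y. l b y u)" for u
  proof -
    have "l (sA c b + b') y u = c * l b y u + 1 * l b' y u" for c b b' y
      by (rule tensor_linear_form_eq[OF l(1) linear_form_lincomb[OF l(1) l(1)]])
         (simp only: l(2) \<beta>_lin)
    moreover have "l b (sK c y + y') u = c * l b y u + 1 * l b y' u" for c b y y'
      by (rule tensor_linear_form_eq[OF l(1) linear_form_lincomb[OF l(1) l(1)]])
         (simp only: l(2) \<beta>_lin)
    ultimately show ?thesis unfolding bilin_AK_iff linear_form_def by simp
  qed
  then have "\<forall>u. \<exists>m. linear_form sG m \<and> (\<forall>b y. m (tm b y) = l b y u)"
    using tensor_linear_form_exists by metis
  then obtain m where m: "\<And>u. linear_form sG (m u)" "\<And>u b y. m u (tm b y) = l b y u"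
    by metis
  have "m (sG c u + u') v = c * m u v + 1 * m u' v" for c u u' v
    by (rule tensor_linear_form_eq[OF m(1) linear_form_lincomb[OF m(1) m(1)]])
       (simp add: m(2) linear_formD[OF l(1)])
  then have "bilinear_form sG m"
    using m(1) unfolding bilinear_form_def linear_form_def by simp
  then show ?thesis using m(2) l(2) by metis
qed

lemma tensor_skew:
  assumes F: "bilinear_form sG F" and s: "\<And>a x b y. F (tm a x) (tm b y) = - F (tm b y) (tm a x)"
  shows "F u v = - F v u"
proof -
  have "F u v = (-1) * F v u"
  proof (rule tensor_bilinear_form_eq[OF F bilinear_form_swap[OF F]])
    fix a x b y
    show "F (tm a x) (tm b y) = -1 * F (tm b y) (tm a x)" using s[of a x b y] by simp
  qed
  then show ?thesis by simp
qed

lemma altform_if_tensor_skew: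
  assumes F: "bilinear_form sG F" and s: "\<And>a x b y. F (tm a x) (tm b y) = - F (tm b y) (tm a x)"
  shows "altform sG F"
proof -
  have "F u u = 0" for u
  proof -
    have "F u u + F u u = 0" using tensor_skew[OF F s, of u u] by (simp only: eq_neg_iff_add_eq_0)
    then have "2 * F u u = 2 * 0" by (metis mult_2 mult_zero_right)
    then show ?thesis by (rule double_cancel)
  qed
  then show ?thesis using F unfolding altform_def bilin_iff_bilinear_form[OF vector_space_G] by blast
qed

lemma tensor_cocycle:
  assumes F: "bilinear_form sG F"
    and g: "\<And>a x b y c z. F (bg (tm a x) (tm b y)) (tm c z) + F (bg (tm b y) (tm c z)) (tm a x)
               + F (bg (tm c z) (tm a x)) (tm b y) = 0"
  shows "F (bg u v) w + F (bg v w) u + F (bg w u) v = 0"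
proof -
  note L = bilinear_form_left[OF F] and R = bilinear_form_right[OF F]
  have lin: "linear_form sG (\<lambda>w. F (bg u v) w + F (bg v w) u + F (bg w u) v)"
            "linear_form sG (\<lambda>v. F (bg u v) w + F (bg v w) u + F (bg w u) v)"
            "linear_form sG (\<lambda>u. F (bg u v) w + F (bg v w) u + F (bg w u) v)" for u v w
    by (simp_all add: linear_form_def L R; simp add: algebra_simps)+
  have "F (bg (tm a x) (tm b y)) w + F (bg (tm b y) w) (tm a x) + F (bg w (tm a x)) (tm b y) = 0"
    for a x b y w
    by (rule tensor_linear_form_eq_zero[OF lin(1)]) (rule g)
  then have "F (bg (tm a x) v) w + F (bg v w) (tm a x) + F (bg w (tm a x)) v = 0" for a x v w
    by (rule tensor_linear_form_eq_zero[OF lin(2)])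
  then show ?thesis
    by (rule tensor_linear_form_eq_zero[OF lin(3)])
qed

lemma module_K: "module sK" using vector_space_K module_iff_vector_space by blast
lemma module_G: "module sG" using vector_space_G module_iff_vector_space by blast

lemma subspace_gprime: "module.subspace sG gp"
  unfolding gprime_def by (rule module.subspace_span[OF module_G])

lemma tm_bracket_in_gprime: "tm a (bk x y) \<in> gp"
proof -
  have "bk x y \<in> derived sK bk"
    unfolding derived_def by (blast intro: module.span_base[OF module_K])
  then show ?thesis
    unfolding gprime_def by (blast intro: module.span_base[OF module_G])
qed

lemma q_eq_iff: "q u = q u' \<longleftrightarrow> u - u' \<in> gp"
  by (rule qmap_eq_iff[OF module_G subspace_gprime])

lemma linear_form_vanishes_on_gprime:
  assumes l: "linear_form sG l" and z: "\<And>a y z. l (tm a (bk y z)) = 0" and v: "v \<in> gp"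
  shows "l v = 0"
proof -
  have "l (tm a y) = 0" if y: "y \<in> derived sK bk" for a y
  proof -
    have "linear_form sK (\<lambda>y. l (tm a y))" unfolding linear_form_def using linear_formD[OF l] by simp
    then have "module_hom sK (*) (\<lambda>y. l (tm a y))"
      unfolding module_hom_iff_linear linear_iff_linear_form[OF vector_space_K] .
    from module_hom.eq_0_on_span[OF this _ y[unfolded derived_def]] z show ?thesis by blast
  qed
  moreover have "module_hom sG (*) l"
    using l unfolding module_hom_iff_linear linear_iff_linear_form[OF vector_space_G] .
  ultimately show ?thesis using module_hom.eq_0_on_span[OF _ _ v[unfolded gprime_def]] by blast
qed

lemma Alt13D:
  assumes "\<omega> \<in> Alt13 sK bk sG tm"
  shows Alt13_outside_range: "X \<notin> range q \<or> Y \<notin> range q \<Longrightarrow> \<omega> X Y = 0"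
    and Alt13_linear_left: "\<omega> (q (sG c u + u')) (q w) = c * \<omega> (q u) (q w) + \<omega> (q u') (q w)"
    and Alt13_linear_right: "\<omega> (q w) (q (sG c u + u')) = c * \<omega> (q w) (q u) + \<omega> (q w) (q u')"
    and Alt13_diag: "\<omega> (q u) (q u) = 0"
    and Alt13_13: "\<omega> (q (tm a x)) (q (tm 1 y)) + \<omega> (q (tm 1 x)) (q (tm a y)) = 0"
  using assms unfolding Alt13_def Let_def by auto

lemma Alt13_bilinear: "\<omega> \<in> Alt13 sK bk sG tm \<Longrightarrow> bilinear_form sG (\<lambda>u v. \<omega> (q u) (q v))"
  unfolding bilinear_form_def linear_form_def by (simp add: Alt13_linear_left Alt13_linear_right)

lemma Alt13_gprime_zero:
  assumes om: "\<omega> \<in> Alt13 sK bk sG tm" and p: "p \<in> gp"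
  shows "\<omega> (q p) Y = 0" "\<omega> X (q p) = 0"
proof -
  have qp: "q p = q 0" using p q_eq_iff by simp
  have "\<omega> (q 0) (q w) = 0" "\<omega> (q w) (q 0) = 0" for w
    using Alt13_linear_left[OF om, of 1 0 0 w] Alt13_linear_right[OF om, of w 1 0 0]
    by (simp_all only: module.scale_zero_right[OF module_G] add_0_right mult_1)
       (metis add_cancel_left_right)+
  then show "\<omega> (q p) Y = 0" "\<omega> X (q p) = 0"
    unfolding qp using Alt13_outside_range[OF om] by (metis rangeE)+
qed

lemma Alt13_Z2:
  assumes om: "\<omega> \<in> Alt13 sK bk sG tm"
  shows "(\<lambda>u v. \<omega> (q u) (q v)) \<in> Z2 sG bg"
proof -
  have "\<omega> (q (bg u v)) (q w) = 0" for u v w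
  proof (rule tensor_bilinear_form_eq[of "\<lambda>u v. \<omega> (q (bg u v)) (q w)" "\<lambda>u v. 0::'k", simplified])
    show "bilinear_form sG (\<lambda>u v. \<omega> (q (bg u v)) (q w))"
      unfolding bilinear_form_def linear_form_def by (simp add: Alt13_linear_left[OF om])
    show "\<omega> (q (bg (tm a x) (tm b y))) (q w) = 0" for a x b y
      by (simp add: bg_tm Alt13_gprime_zero[OF om tm_bracket_in_gprime])
  qed (rule bilinear_form_zero)
  then show ?thesis
    using Alt13_bilinear[OF om] Alt13_diag[OF om]
    unfolding Z2_def altform_def bilin_iff_bilinear_form[OF vector_space_G] by simp
qed

lemma Alt13_lincomb:
  assumes om: "\<omega> \<in> Alt13 sK bk sG tm" and om': "\<omega>' \<in> Alt13 sK bk sG tm"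
  shows "(\<lambda>X Y. c * \<omega> X Y + \<omega>' X Y) \<in> Alt13 sK bk sG tm"
proof -
  have "c * \<omega> (q (tm a x)) (q (tm 1 y)) + \<omega>' (q (tm a x)) (q (tm 1 y))
      + (c * \<omega> (q (tm 1 x)) (q (tm a y)) + \<omega>' (q (tm 1 x)) (q (tm a y)))
    = c * (\<omega> (q (tm a x)) (q (tm 1 y)) + \<omega> (q (tm 1 x)) (q (tm a y)))
      + (\<omega>' (q (tm a x)) (q (tm 1 y)) + \<omega>' (q (tm 1 x)) (q (tm a y)))" for a x y
    by (simp add: algebra_simps)
  then show ?thesis
    using Alt13D[OF om] Alt13D[OF om'] unfolding Alt13_def Let_def
    by (simp add: algebra_simps)
qed

section \<open>The forms \<open>f\<^sub>\<psi>\<close> and linear lifts\<close>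

definition linear_to_Alt2 :: "('a \<Rightarrow> 'b \<Rightarrow> 'b \<Rightarrow> 'k) \<Rightarrow> bool" where
  "linear_to_Alt2 \<psi> \<longleftrightarrow> (\<forall>a. altform sK (\<psi> a)) \<and>
     (\<forall>c a a'. \<psi> (sA c a + a') = (\<lambda>x y. c * \<psi> a x y + \<psi> a' x y))"

lemma linear_to_Alt2D:
  assumes "linear_to_Alt2 \<psi>"
  shows linear_to_Alt2_altform: "altform sK (\<psi> a)"
    and linear_to_Alt2_lincomb_arg: "\<psi> (sA c a + a') x y = c * \<psi> a x y + \<psi> a' x y"
  using assms unfolding linear_to_Alt2_def by simp_all

lemma linear_to_Alt2_lincomb:
  assumes "linear_to_Alt2 \<psi>" "linear_to_Alt2 \<psi>'"
  shows "linear_to_Alt2 (\<lambda>a x y. c * \<psi> a x y + \<psi>' a x y)"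
proof -
  have "bilinear_form sK (\<lambda>x y. c * \<psi> a x y + 1 * \<psi>' a x y)" for a
    using assms by (intro bilinear_form_lincomb altform_bilinear_form[OF vector_space_K]
        linear_to_Alt2_altform)
  then show ?thesis
    using assms unfolding linear_to_Alt2_def altform_def bilin_iff_bilinear_form[OF vector_space_K]
    by (simp add: fun_eq_iff algebra_simps)
qed

lemma fof_tensor:
  assumes \<psi>: "linear_to_Alt2 \<psi>"
  shows fof_bilinear: "bilinear_form sG (fof \<psi>)"
    and fof_tm: "fof \<psi> (tm a x) (tm b y) = \<psi> (a * b) x y"
proof -
  have lk: "linear_form sK (\<lambda>x. \<psi> c x y)" "linear_form sK (\<psi> c x)" for c x y
    using altform_bilinear_form[OF vector_space_K linear_to_Alt2_altform[OF \<psi>]]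
    unfolding bilinear_form_def by blast+
  have "bilin sA sK (*) (\<lambda>a x. \<psi> (a * b) x y)" for b y
    using lk by (simp add: bilin_AK_iff linear_form_def linear_to_Alt2_lincomb_arg[OF \<psi>])
  moreover have "bilin sA sK (*) (\<lambda>b y. \<psi> (a * b) x y)" for a x
    using lk by (simp add: bilin_AK_iff linear_form_def linear_to_Alt2_lincomb_arg[OF \<psi>])
  ultimately have "\<exists>F. bilinear_form sG F \<and> (\<forall>a x b y. F (tm a x) (tm b y) = \<psi> (a * b) x y)"
    by (rule tensor_bilinear_form_exists)
  then have "bilinear_form sG (fof \<psi>) \<and> (\<forall>a x b y. fof \<psi> (tm a x) (tm b y) = \<psi> (a * b) x y)"
    unfolding f_of_def bilin_iff_bilinear_form[OF vector_space_G] by (rule someI_ex)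
  then show "bilinear_form sG (fof \<psi>)" "fof \<psi> (tm a x) (tm b y) = \<psi> (a * b) x y"
    by simp_all
qed

lemma fof_type2:
  assumes \<psi>: "linear_to_Alt2 \<psi>"
  shows "type2 sA sK sG tm (fof \<psi>)"
proof -
  have "altform sG (fof \<psi>)"
  proof (rule altform_if_tensor_skew[OF fof_bilinear[OF \<psi>]])
    fix a b x y
    show "fof \<psi> (tm a x) (tm b y) = - fof \<psi> (tm b y) (tm a x)"
      unfolding fof_tm[OF \<psi>] mult.commute[of b a]
      by (rule altform_skew[OF vector_space_K linear_to_Alt2_altform[OF \<psi>]])
  qed
  moreover have "Vector_Spaces.linear sA (*) (\<lambda>a. \<psi> a x y)" for x y
    unfolding linear_iff_linear_form[OF vector_space_A] linear_form_def
    by (simp add: linear_to_Alt2_lincomb_arg[OF \<psi>])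
  ultimately show ?thesis
    unfolding type2_def using linear_to_Alt2_altform[OF \<psi>] fof_tm[OF \<psi>] by blast
qed

lemma fof_altform: "linear_to_Alt2 \<psi> \<Longrightarrow> altform sG (fof \<psi>)"
  using fof_type2 unfolding type2_def by blast

lemma fof_lincomb:
  assumes \<psi>: "linear_to_Alt2 \<psi>" and \<psi>': "linear_to_Alt2 \<psi>'"
  shows "fof (\<lambda>a x y. c * \<psi> a x y + \<psi>' a x y) u v = c * fof \<psi> u v + fof \<psi>' u v"
proof (rule tensor_bilinear_form_eq)
  show "bilinear_form sG (fof (\<lambda>a x y. c * \<psi> a x y + \<psi>' a x y))"
    by (rule fof_bilinear[OF linear_to_Alt2_lincomb[OF \<psi> \<psi>']])
  show "bilinear_form sG (\<lambda>u v. c * fof \<psi> u v + fof \<psi>' u v)"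
    using bilinear_form_lincomb[OF fof_bilinear[OF \<psi>] fof_bilinear[OF \<psi>'], of c 1] by simp
qed (simp add: fof_tm \<psi> \<psi>' linear_to_Alt2_lincomb)

lemma fof_Z2:
  assumes \<psi>: "linear_to_Alt2 \<psi>" and Z: "\<And>a. \<psi> a \<in> Z2 sK bk"
  shows "fof \<psi> \<in> Z2 sG bg"
proof -
  have "fof \<psi> (bg u v) w + fof \<psi> (bg v w) u + fof \<psi> (bg w u) v = 0" for u v w
  proof (rule tensor_cocycle[OF fof_bilinear[OF \<psi>]])
    fix a b c :: 'a and x y z :: 'b
    have "\<psi> (a * b * c) (bk x y) z + \<psi> (a * b * c) (bk y z) x
        + \<psi> (a * b * c) (bk z x) y = 0"
      using Z[of "a * b * c"] unfolding Z2_def by simp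
    then show "fof \<psi> (bg (tm a x) (tm b y)) (tm c z) + fof \<psi> (bg (tm b y) (tm c z)) (tm a x)
        + fof \<psi> (bg (tm c z) (tm a x)) (tm b y) = 0"
      by (simp add: bg_tm fof_tm[OF \<psi>] ac_simps)
  qed
  then show ?thesis using fof_altform[OF \<psi>] unfolding Z2_def by simp
qed

lemma form_subspace_B2K: "form_subspace (B2 sK bk)"
  by (rule form_subspace_B2[OF vector_space_K])

lemma form_subspace_B2G: "form_subspace (B2 sG bg)"
  by (rule form_subspace_B2[OF vector_space_G])

lemma LinAH2D:
  assumes "\<phi> \<in> LinAH2 sA sK bk"
  shows LinAH2_H2: "\<phi> a \<in> H2 sK bk"
    and LinAH2_lincomb: "\<phi> (sA c a + a') = hcomb (B2 sK bk) c (\<phi> a) (\<phi> a')"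
  using assms unfolding LinAH2_def by auto

lemma liftD:
  assumes "is_lift sA sK bk \<phi> \<psi>"
  shows lift_Z2: "\<psi> a \<in> Z2 sK bk"
    and lift_mem: "\<psi> a \<in> \<phi> a"
    and lift_linear_to_Alt2: "linear_to_Alt2 \<psi>"
  using assms unfolding is_lift_def linear_to_Alt2_def Z2_def by auto

lemma cls_of_mem_H2:
  assumes "X \<in> H2 sK bk" "v \<in> X"
  shows "X = cls (B2 sK bk) v"
proof -
  obtain z where "X = cls (B2 sK bk) z" using assms(1) by (rule H2E)
  then show ?thesis using cls_eq_cls_of_mem[OF form_subspace_B2K] assms(2) by simp
qed

lemma lift_cls:
  assumes \<phi>: "\<phi> \<in> LinAH2 sA sK bk" and \<psi>: "is_lift sA sK bk \<phi> \<psi>"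
  shows "\<phi> a = cls (B2 sK bk) (\<psi> a)"
  using cls_of_mem_H2[OF LinAH2_H2[OF \<phi>] lift_mem[OF \<psi>]] .

lemma lift_exists:
  assumes \<phi>: "\<phi> \<in> LinAH2 sA sK bk"
  shows "\<exists>\<psi>. is_lift sA sK bk \<phi> \<psi>"
proof -
  let ?s = "scale_fun (scale_fun (*)) :: 'k \<Rightarrow> ('b \<Rightarrow> 'b \<Rightarrow> 'k) \<Rightarrow> 'b \<Rightarrow> 'b \<Rightarrow> 'k"
  have s: "?s c v + v' = (\<lambda>x y. c * v x y + v' x y)" for c v v'
    by (simp add: scale_fun_def fun_eq_iff)
  define R where "R a v \<longleftrightarrow> v \<in> Z2 sK bk \<and> v \<in> \<phi> a" for a v
  have ex: "\<exists>v. R a v" for a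
  proof -
    obtain z where "z \<in> Z2 sK bk" "\<phi> a = cls (B2 sK bk) z" using LinAH2_H2[OF \<phi>] by (rule H2E)
    then show ?thesis unfolding R_def using mem_cls_self[OF form_subspace_B2K] by blast
  qed
  have closed: "R (sA c a + a') (?s c v + v')" if "R a v" "R a' v'" for c a a' v v'
  proof -
    have "\<phi> a = cls (B2 sK bk) v" "\<phi> a' = cls (B2 sK bk) v'"
      using that cls_of_mem_H2[OF LinAH2_H2[OF \<phi>]] unfolding R_def by simp_all
    then have "\<phi> (sA c a + a') = cls (B2 sK bk) (\<lambda>x y. c * v x y + v' x y)"
      unfolding LinAH2_lincomb[OF \<phi>] by (simp add: hcomb_cls[OF form_subspace_B2K])
    moreover have "(\<lambda>x y. c * v x y + v' x y) \<in> Z2 sK bk"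
      using that unfolding R_def by (simp add: Z2_lincomb[OF vector_space_K])
    ultimately show ?thesis
      unfolding R_def s using mem_cls_self[OF form_subspace_B2K] by simp
  qed
  have "\<exists>\<sigma>. (\<forall>c a a'. \<sigma> (sA c a + a') = ?s c (\<sigma> a) + \<sigma> a') \<and> (\<forall>a. R a (\<sigma> a))"
    by (rule linear_choice[OF vector_space_A])
       (intro vector_space_scale_fun vector_space_field_mult, fact ex, fact closed)
  then obtain \<sigma> where "\<And>c a a'. \<sigma> (sA c a + a') = ?s c (\<sigma> a) + \<sigma> a'" and \<sigma>: "\<And>a. R a (\<sigma> a)"
    by blast
  then have "\<sigma> (sA c a + a') = (\<lambda>x y. c * \<sigma> a x y + \<sigma> a' x y)" for c a a'
    unfolding s by simp
  then have "is_lift sA sK bk \<phi> \<sigma>" unfolding is_lift_def using \<sigma> unfolding R_def by simp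
  then show ?thesis by blast
qed

lemma coboundary_family_primitive:
  assumes \<delta>: "\<And>a. \<delta> a \<in> B2 sK bk"
    and \<delta>_lin: "\<And>c a a' x y. \<delta> (sA c a + a') x y = c * \<delta> a x y + \<delta> a' x y"
  shows "\<exists>\<Lambda>. linear_form sG \<Lambda> \<and> (\<forall>a x y. \<delta> a x y = - \<Lambda> (tm a (bk x y)))"
proof -
  let ?s = "scale_fun (*) :: 'k \<Rightarrow> ('b \<Rightarrow> 'k) \<Rightarrow> 'b \<Rightarrow> 'k"
  have s: "?s c l + l' = (\<lambda>z. c * l z + l' z)" for c l l'
    by (simp add: scale_fun_def fun_eq_iff)
  define R where "R a l \<longleftrightarrow> linear_form sK l \<and> \<delta> a = (\<lambda>x y. - l (bk x y))" for a l
  have ex: "\<exists>l. R a l" for a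
    using \<delta>[of a] unfolding B2_def R_def linear_iff_linear_form[OF vector_space_K] by blast
  have closed: "R (sA c a + a') (?s c l + l')" if "R a l" "R a' l'" for c a a' l l'
    using that linear_form_lincomb[of sK l l' c 1]
    unfolding R_def s by (simp add: fun_eq_iff \<delta>_lin; simp add: algebra_simps)
  have "\<exists>\<sigma>. (\<forall>c a a'. \<sigma> (sA c a + a') = ?s c (\<sigma> a) + \<sigma> a') \<and> (\<forall>a. R a (\<sigma> a))"
    by (rule linear_choice[OF vector_space_A])
       (intro vector_space_scale_fun vector_space_field_mult, fact ex, fact closed)
  then obtain \<sigma> where "\<And>c a a'. \<sigma> (sA c a + a') = ?s c (\<sigma> a) + \<sigma> a'" and \<sigma>: "\<And>a. R a (\<sigma> a)"
    by blast
  then have "\<sigma> (sA c a + a') z = c * \<sigma> a z + \<sigma> a' z" for c a a' z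
    unfolding s by simp
  then have "bilin sA sK (*) \<sigma>"
    using \<sigma> unfolding bilin_AK_iff R_def linear_form_def by simp
  then obtain \<Lambda> where "linear_form sG \<Lambda>" "\<And>a x. \<Lambda> (tm a x) = \<sigma> a x"
    using tensor_linear_form_exists by blast
  then show ?thesis using \<sigma> unfolding R_def by auto
qed

lemma fof_B2:
  assumes \<delta>: "linear_to_Alt2 \<delta>" and B: "\<And>a. \<delta> a \<in> B2 sK bk"
  shows "fof \<delta> \<in> B2 sG bg"
proof -
  obtain \<Lambda> where \<Lambda>: "linear_form sG \<Lambda>" "\<And>a x y. \<delta> a x y = - \<Lambda> (tm a (bk x y))"
    using coboundary_family_primitive[OF B linear_to_Alt2_lincomb_arg[OF \<delta>]] by blast
  have "fof \<delta> u v = - \<Lambda> (bg u v)" for u v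
  proof (rule tensor_bilinear_form_eq[OF fof_bilinear[OF \<delta>], where F'="\<lambda>u v. - \<Lambda> (bg u v)"])
    show "bilinear_form sG (\<lambda>u v. - \<Lambda> (bg u v))"
      using \<Lambda>(1) unfolding bilinear_form_def linear_form_def by simp
  qed (simp add: fof_tm[OF \<delta>] bg_tm \<Lambda>(2))
  then have "fof \<delta> = (\<lambda>u v. - \<Lambda> (bg u v))" by (intro ext)
  then show ?thesis
    unfolding B2_def linear_iff_linear_form[OF vector_space_G] using \<Lambda>(1) by blast
qed

lemma Phi_eq_lift:
  assumes \<phi>: "\<phi> \<in> LinAH2 sA sK bk" and \<psi>: "is_lift sA sK bk \<phi> \<psi>"
  shows "Phi sA sK bk sG bg tm (\<omega>, \<phi>) = cls (B2 sG bg) (\<lambda>u v. \<omega> (q u) (q v) + fof \<psi> u v)"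
proof -
  define \<psi>\<^sub>0 where "\<psi>\<^sub>0 = (SOME \<psi>. is_lift sA sK bk \<phi> \<psi>)"
  have \<psi>\<^sub>0: "is_lift sA sK bk \<phi> \<psi>\<^sub>0" unfolding \<psi>\<^sub>0_def by (rule someI_ex[OF lift_exists[OF \<phi>]])
  note L = lift_linear_to_Alt2[OF \<psi>] and L\<^sub>0 = lift_linear_to_Alt2[OF \<psi>\<^sub>0]
  have "(\<lambda>x y. \<psi>\<^sub>0 a x y - \<psi> a x y) \<in> B2 sK bk" for a
    using lift_cls[OF \<phi> \<psi>\<^sub>0] lift_cls[OF \<phi> \<psi>] by (simp add: cls_eqD[OF form_subspace_B2K])
  then have "fof (\<lambda>a x y. (-1) * \<psi> a x y + \<psi>\<^sub>0 a x y) \<in> B2 sG bg"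
    by (intro fof_B2 linear_to_Alt2_lincomb L L\<^sub>0) simp
  then have "(\<lambda>u v. (\<omega> (q u) (q v) + fof \<psi>\<^sub>0 u v) - (\<omega> (q u) (q v) + fof \<psi> u v)) \<in> B2 sG bg"
    unfolding fof_lincomb[OF L L\<^sub>0] by simp
  then have "cls (B2 sG bg) (\<lambda>u v. \<omega> (q u) (q v) + fof \<psi>\<^sub>0 u v)
      = cls (B2 sG bg) (\<lambda>u v. \<omega> (q u) (q v) + fof \<psi> u v)"
    by (rule cls_eqI[OF form_subspace_B2G])
  then show ?thesis unfolding Phi_def Let_def \<psi>\<^sub>0_def by simp
qed

lemma Phi_well_defined:
  "\<forall>\<omega> \<phi>. (\<omega>, \<phi>) \<in> Phi_domain \<longrightarrow>
      (\<exists>\<psi>. is_lift sA sK bk \<phi> \<psi>) \<and>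
      (\<lambda>u v. \<omega> (q u) (q v)) \<in> Z2 sG bg \<and>
      (\<forall>\<psi>. is_lift sA sK bk \<phi> \<psi> \<longrightarrow>
         bilin sG sG (*) (fof \<psi>) \<and>
         (\<forall>a x b y. fof \<psi> (tm a x) (tm b y) = \<psi> (a * b) x y) \<and>
         fof \<psi> \<in> Z2 sG bg \<and>
         Phi sA sK bk sG bg tm (\<omega>, \<phi>) = cls (B2 sG bg) (\<lambda>u v. \<omega> (q u) (q v) + fof \<psi> u v)) \<and>
      Phi sA sK bk sG bg tm (\<omega>, \<phi>) \<in> H2 sG bg"
  (is "\<forall>\<omega> \<phi>. _ \<longrightarrow> ?well_defined \<omega> \<phi>")
proof (intro allI impI)
  fix \<omega> \<phi> assume "(\<omega>, \<phi>) \<in> Phi_domain"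
  then have \<omega>: "\<omega> \<in> Alt13 sK bk sG tm" and \<phi>: "\<phi> \<in> LinAH2 sA sK bk" by simp_all
  have fof_Z2_lift: "fof \<psi> \<in> Z2 sG bg" if "is_lift sA sK bk \<phi> \<psi>" for \<psi>
    by (rule fof_Z2[OF lift_linear_to_Alt2[OF that] lift_Z2[OF that]])
  obtain \<psi> where \<psi>: "is_lift sA sK bk \<phi> \<psi>" using lift_exists[OF \<phi>] by blast
  have "(\<lambda>u v. 1 * \<omega> (q u) (q v) + fof \<psi> u v) \<in> Z2 sG bg"
    by (rule Z2_lincomb[OF vector_space_G Alt13_Z2[OF \<omega>] fof_Z2_lift[OF \<psi>]])
  then have "Phi sA sK bk sG bg tm (\<omega>, \<phi>) \<in> H2 sG bg"
    unfolding Phi_eq_lift[OF \<phi> \<psi>] H2_def by simp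
  then show "?well_defined \<omega> \<phi>"
    using \<psi> Alt13_Z2[OF \<omega>] fof_Z2_lift Phi_eq_lift[OF \<phi>] fof_bilinear fof_tm lift_linear_to_Alt2
    by (simp add: bilin_iff_bilinear_form[OF vector_space_G]) blast
qed

section \<open>Decomposition of alternating forms\<close>

lemma type1_bilinear: "type1 sG tm F \<Longrightarrow> bilinear_form sG F"
  unfolding type1_def using altform_bilinear_form[OF vector_space_G] by blast

lemma type3_bilinear: "type3 sA sK sG tm F \<Longrightarrow> bilinear_form sG F"
  unfolding type3_def using altform_bilinear_form[OF vector_space_G] by blast

lemma type1_exists:
  assumes f: "altform sG f"
  shows "\<exists>F. type1 sG tm F \<and>
    (\<forall>a x b y. 2 * F (tm a x) (tm b y) = f (tm a x) (tm b y) + f (tm a y) (tm b x))"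
proof -
  note fb = altform_bilinear_form[OF vector_space_G f]
  note L = bilinear_form_left[OF fb] and R = bilinear_form_right[OF fb]
  have fs: "f u v = - f v u" for u v by (rule altform_skew[OF vector_space_G f])
  define P where "P a x b y = f (tm a x) (tm b y) + f (tm a y) (tm b x)" for a x b y
  have "\<exists>F. bilinear_form sG F \<and> (\<forall>a x b y. F (tm a x) (tm b y) = inverse 2 * P a x b y)"
    by (rule tensor_bilinear_form_exists)
       (simp add: P_def bilin_AK_iff linear_form_def L R; simp add: algebra_simps)+
  then obtain F where F: "bilinear_form sG F" "\<And>a x b y. F (tm a x) (tm b y) = inverse 2 * P a x b y"
    by blast
  have F2: "2 * F (tm a x) (tm b y) = P a x b y" for a x b y
    unfolding F(2) by (rule double_half)
  have "altform sG F"
  proof (rule altform_if_tensor_skew[OF F(1)])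
    fix a b x y
    show "F (tm a x) (tm b y) = - F (tm b y) (tm a x)"
      by (rule double_cancel) (simp add: F2 P_def fs[of "tm b y"] fs[of "tm b x"])
  qed
  moreover have "F (tm a x) (tm b y) = - F (tm b x) (tm a y)" for a b x y
    by (rule double_cancel) (simp add: F2 P_def fs[of "tm b y"] fs[of "tm b x"])
  moreover have "F (tm a x) (tm b y) = F (tm a y) (tm b x)" for a b x y
    by (rule double_cancel) (simp add: F2 P_def)
  ultimately have "type1 sG tm F" unfolding type1_def by blast
  then show ?thesis using F2 unfolding P_def by blast
qed

lemma type3_exists:
  assumes alt: "\<And>a b. altform sK (L a b)"
    and bil: "\<And>x y. bilin sA sA (*) (\<lambda>a b. L a b x y)"
    and sym: "\<And>a b. L a b = L b a"
  shows "\<exists>F. type3 sA sK sG tm F \<and>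
    (\<forall>a x b y. F (tm a x) (tm b y) = L a b x y - L (a * b) 1 x y)"
proof -
  have LA: "L (sA c a + a') b x y = c * L a b x y + L a' b x y"
    "L a (sA c b + b') x y = c * L a b x y + L a b' x y" for a a' b b' c x y
    using bil[of x y] unfolding bilin_iff_linear_forms[OF vector_space_A vector_space_A]
      linear_form_def by simp_all
  have LK: "L a b (sK c x + x') y = c * L a b x y + L a b x' y"
    "L a b x (sK c y + y') = c * L a b x y + L a b x y'" for a b c x x' y y'
    using altform_bilinear_form[OF vector_space_K alt[of a b]]
    by (simp_all add: bilinear_form_left bilinear_form_right)
  have "\<exists>F. bilinear_form sG F \<and> (\<forall>a x b y. F (tm a x) (tm b y) = L a b x y - L (a * b) 1 x y)"
    by (rule tensor_bilinear_form_exists)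
       (simp add: bilin_AK_iff linear_form_def LA LK; simp add: algebra_simps)+
  then obtain F where F: "bilinear_form sG F"
    "\<And>a x b y. F (tm a x) (tm b y) = L a b x y - L (a * b) 1 x y" by blast
  have "altform sG F"
  proof (rule altform_if_tensor_skew[OF F(1)])
    fix a b x y
    show "F (tm a x) (tm b y) = - F (tm b y) (tm a x)"
      unfolding F(2) sym[of b a] mult.commute[of b a]
      using altform_skew[OF vector_space_K alt, of a b x y]
        altform_skew[OF vector_space_K alt, of "a * b" 1 x y] by simp
  qed
  then show ?thesis unfolding type3_def using alt bil sym F(2) by blast
qed

text \<open>On generators, \<open>f\<^sub>2 p\<^sub>2 (a x, b y) = comp2_coeff f (a * b) x y\<close> and
  \<open>f\<^sub>3 p\<^sub>3 (a x, b y) = comp3_coeff f a b x y - comp3_coeff f (a * b) 1 x y\<close>.\<close>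

definition comp3_coeff :: "('g \<Rightarrow> 'g \<Rightarrow> 'k) \<Rightarrow> 'a \<Rightarrow> 'a \<Rightarrow> 'b \<Rightarrow> 'b \<Rightarrow> 'k" where
  "comp3_coeff f a b x y = inverse 2 * (f (tm a x) (tm b y) - f (tm a y) (tm b x))"

definition comp2_coeff :: "('g \<Rightarrow> 'g \<Rightarrow> 'k) \<Rightarrow> 'a \<Rightarrow> 'b \<Rightarrow> 'b \<Rightarrow> 'k" where
  "comp2_coeff f c = comp3_coeff f c 1"

lemma comp3_coeff_altform:
  assumes f: "bilinear_form sG f"
  shows "altform sK (comp3_coeff f a b)"
proof -
  note L = bilinear_form_left[OF f] and R = bilinear_form_right[OF f]
  have "bilinear_form sK (\<lambda>x y. f (tm a x) (tm b y) - f (tm a y) (tm b x))"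
    unfolding bilinear_form_def linear_form_def by (simp add: L R; simp add: algebra_simps)
  then have "bilinear_form sK (comp3_coeff f a b)"
    unfolding comp3_coeff_def[abs_def] by (rule bilinear_form_scale)
  then show ?thesis
    unfolding altform_def bilin_iff_bilinear_form[OF vector_space_K] by (simp add: comp3_coeff_def)
qed

lemma comp3_coeff_lincomb_left:
  assumes f: "bilinear_form sG f"
  shows "comp3_coeff f (sA c a + a') b x y = c * comp3_coeff f a b x y + comp3_coeff f a' b x y"
proof -
  note L = bilinear_form_left[OF f] and R = bilinear_form_right[OF f]
  have "f (tm (sA c a + a') x) (tm b y) - f (tm (sA c a + a') y) (tm b x)
      = c * (f (tm a x) (tm b y) - f (tm a y) (tm b x)) + (f (tm a' x) (tm b y) - f (tm a' y) (tm b x))"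
    by (simp add: L; simp add: algebra_simps)
  then show ?thesis unfolding comp3_coeff_def by (simp only:) (simp add: algebra_simps)
qed

lemma comp3_coeff_symmetric:
  assumes f: "altform sG f"
  shows "comp3_coeff f a b = comp3_coeff f b a"
  unfolding comp3_coeff_def fun_eq_iff
  using altform_skew[OF vector_space_G f, of "tm b x" "tm a y" for x y]
    altform_skew[OF vector_space_G f, of "tm b y" "tm a x" for x y]
  by (simp add: algebra_simps)

lemma comp3_coeff_bilin:
  assumes f: "altform sG f"
  shows "bilin sA sA (*) (\<lambda>a b. comp3_coeff f a b x y)"
proof -
  note left = comp3_coeff_lincomb_left[OF altform_bilinear_form[OF vector_space_G f]]
  have "comp3_coeff f a (sA c b + b') x y = c * comp3_coeff f a b x y + comp3_coeff f a b' x y"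
    for a b b' c
    unfolding comp3_coeff_symmetric[OF f, of a] left ..
  then show ?thesis
    using left unfolding bilin_iff_linear_forms[OF vector_space_A vector_space_A] linear_form_def
    by simp
qed

lemma linear_to_Alt2_comp2_coeff:
  assumes f: "bilinear_form sG f"
  shows "linear_to_Alt2 (comp2_coeff f)"
  unfolding linear_to_Alt2_def comp2_coeff_def
  using comp3_coeff_altform[OF f] comp3_coeff_lincomb_left[OF f] by (simp add: fun_eq_iff)

lemma altform_decomposition:
  assumes f: "altform sG f"
  shows "\<exists>F1 F2 F3. type1 sG tm F1 \<and> type2 sA sK sG tm F2 \<and> type3 sA sK sG tm F3 \<and>
    f = (\<lambda>u v. F1 u v + F2 u v + F3 u v)"
proof -
  note fb = altform_bilinear_form[OF vector_space_G f]
  obtain F1 where F1: "type1 sG tm F1"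
    "\<And>a x b y. 2 * F1 (tm a x) (tm b y) = f (tm a x) (tm b y) + f (tm a y) (tm b x)"
    using type1_exists[OF f] by blast
  define F2 where "F2 = fof (comp2_coeff f)"
  have h: "linear_to_Alt2 (comp2_coeff f)" by (rule linear_to_Alt2_comp2_coeff[OF fb])
  have "\<exists>F3. type3 sA sK sG tm F3 \<and> (\<forall>a x b y.
      F3 (tm a x) (tm b y) = comp3_coeff f a b x y - comp3_coeff f (a * b) 1 x y)"
    by (rule type3_exists[OF comp3_coeff_altform[OF fb] comp3_coeff_bilin[OF f]
          comp3_coeff_symmetric[OF f]])
  then obtain F3 where F3: "type3 sA sK sG tm F3"
    "\<And>a x b y. F3 (tm a x) (tm b y) = comp3_coeff f a b x y - comp3_coeff f (a * b) 1 x y"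
    by blast
  have bilinear: "bilinear_form sG F1" "bilinear_form sG F2" "bilinear_form sG F3"
    using type1_bilinear[OF F1(1)] fof_bilinear[OF h] type3_bilinear[OF F3(1)]
    unfolding F2_def by simp_all
  have "f u v = F1 u v + F2 u v + F3 u v" for u v
  proof (rule tensor_bilinear_form_eq[OF fb, where F'="\<lambda>u v. F1 u v + F2 u v + F3 u v"])
    show "bilinear_form sG (\<lambda>u v. F1 u v + F2 u v + F3 u v)"
      using bilinear_form_lincomb[OF bilinear_form_lincomb[OF bilinear(1,2), of 1 1] bilinear(3),
          of 1 1] by simp
    fix a x b y
    have "F2 (tm a x) (tm b y) + F3 (tm a x) (tm b y) = comp3_coeff f a b x y"
      unfolding F2_def fof_tm[OF h] F3(2) comp2_coeff_def by simp
    moreover have "2 * (F1 (tm a x) (tm b y) + comp3_coeff f a b x y) = 2 * f (tm a x) (tm b y)"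
    proof -
      have "2 * (F1 (tm a x) (tm b y) + comp3_coeff f a b x y)
          = 2 * F1 (tm a x) (tm b y) + 2 * comp3_coeff f a b x y"
        by (rule distrib_left)
      also have "\<dots> = (f (tm a x) (tm b y) + f (tm a y) (tm b x))
          + (f (tm a x) (tm b y) - f (tm a y) (tm b x))"
        unfolding F1(2) comp3_coeff_def double_half ..
      also have "\<dots> = 2 * f (tm a x) (tm b y)"
        by simp
      finally show ?thesis .
    qed
    ultimately have "2 * f (tm a x) (tm b y)
        = 2 * (F1 (tm a x) (tm b y) + F2 (tm a x) (tm b y) + F3 (tm a x) (tm b y))"
      by (simp add: add.assoc)
    then show "f (tm a x) (tm b y)
        = F1 (tm a x) (tm b y) + F2 (tm a x) (tm b y) + F3 (tm a x) (tm b y)"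
      by (rule double_cancel)
  qed
  then have "f = (\<lambda>u v. F1 u v + F2 u v + F3 u v)" by (intro ext)
  then show ?thesis using F1(1) fof_type2[OF h] F3(1) unfolding F2_def by blast
qed

lemma type1_component_tensor:
  assumes F1: "type1 sG tm F1" and F2: "type2 sA sK sG tm F2" and F3: "type3 sA sK sG tm F3"
    and f: "f = (\<lambda>u v. F1 u v + F2 u v + F3 u v)"
  shows "2 * F1 (tm a x) (tm b y) = f (tm a x) (tm b y) + f (tm a y) (tm b x)"
proof -
  obtain h where h: "\<And>a. altform sK (h a)" "\<And>a b x y. F2 (tm a x) (tm b y) = h (a * b) x y"
    using F2 unfolding type2_def by blast
  obtain L where L: "\<And>a b. altform sK (L a b)"
    "\<And>a b x y. F3 (tm a x) (tm b y) = L a b x y - L (a * b) 1 x y"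
    using F3 unfolding type3_def by blast
  have "F1 (tm a y) (tm b x) = F1 (tm a x) (tm b y)" using F1 unfolding type1_def by metis
  moreover have "h (a * b) y x = - h (a * b) x y" "L a b y x = - L a b x y"
    "L (a * b) 1 y x = - L (a * b) 1 x y"
    using altform_skew[OF vector_space_K h(1)] altform_skew[OF vector_space_K L(1)] by blast+
  ultimately show ?thesis unfolding f h(2) L(2) by simp
qed

lemma comp1_tensor:
  assumes f: "altform sG f"
  shows "bilinear_form sG (comp1 sA sK sG tm f)"
    and "2 * comp1 sA sK sG tm f (tm a x) (tm b y) = f (tm a x) (tm b y) + f (tm a y) (tm b x)"
proof -
  obtain F1 F2 F3 where F: "type1 sG tm F1" "type2 sA sK sG tm F2" "type3 sA sK sG tm F3"
    "f = (\<lambda>u v. F1 u v + F2 u v + F3 u v)"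
    using altform_decomposition[OF f] by blast
  have "comp1 sA sK sG tm f = F1"
    unfolding comp1_def
  proof (rule the_equality)
    fix F1' assume "type1 sG tm F1' \<and> (\<exists>F2 F3. type2 sA sK sG tm F2 \<and> type3 sA sK sG tm F3 \<and>
        f = (\<lambda>u v. F1' u v + F2 u v + F3 u v))"
    then obtain F2' F3' where F': "type1 sG tm F1'" "type2 sA sK sG tm F2'" "type3 sA sK sG tm F3'"
      "f = (\<lambda>u v. F1' u v + F2' u v + F3' u v)" by blast
    have "F1' (tm a x) (tm b y) = F1 (tm a x) (tm b y)" for a x b y
      by (rule double_cancel)
        (simp only: type1_component_tensor[OF F'] type1_component_tensor[OF F])
    then show "F1' = F1"
      using tensor_bilinear_form_eq[OF type1_bilinear[OF F'(1)] type1_bilinear[OF F(1)]] by blast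
  qed (use F in blast)
  then show "bilinear_form sG (comp1 sA sK sG tm f)"
    and "2 * comp1 sA sK sG tm f (tm a x) (tm b y) = f (tm a x) (tm b y) + f (tm a y) (tm b x)"
    using type1_bilinear[OF F(1)] type1_component_tensor[OF F] by simp_all
qed

section \<open>Linearity and injectivity of \<open>\<Phi>\<close>\<close>

lemma lift_lincomb:
  assumes \<phi>: "\<phi> \<in> LinAH2 sA sK bk" and \<phi>': "\<phi>' \<in> LinAH2 sA sK bk"
    and \<psi>: "is_lift sA sK bk \<phi> \<psi>" and \<psi>': "is_lift sA sK bk \<phi>' \<psi>'"
  shows "is_lift sA sK bk (\<lambda>a. hcomb (B2 sK bk) c (\<phi> a) (\<phi>' a)) (\<lambda>a x y. c * \<psi> a x y + \<psi>' a x y)"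
  unfolding is_lift_def
proof (intro conjI allI)
  fix a
  show "(\<lambda>x y. c * \<psi> a x y + \<psi>' a x y) \<in> Z2 sK bk"
    by (rule Z2_lincomb[OF vector_space_K lift_Z2[OF \<psi>] lift_Z2[OF \<psi>']])
  show "(\<lambda>x y. c * \<psi> a x y + \<psi>' a x y) \<in> hcomb (B2 sK bk) c (\<phi> a) (\<phi>' a)"
    unfolding lift_cls[OF \<phi> \<psi>] lift_cls[OF \<phi>' \<psi>'] hcomb_cls[OF form_subspace_B2K]
    by (rule mem_cls_self[OF form_subspace_B2K])
next
  fix c' a a'
  show "(\<lambda>x y. c * \<psi> (sA c' a + a') x y + \<psi>' (sA c' a + a') x y)
      = (\<lambda>x y. c' * (c * \<psi> a x y + \<psi>' a x y) + (c * \<psi> a' x y + \<psi>' a' x y))"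
    using linear_to_Alt2_lincomb_arg[OF lift_linear_to_Alt2[OF \<psi>]]
      linear_to_Alt2_lincomb_arg[OF lift_linear_to_Alt2[OF \<psi>']]
    by (simp add: fun_eq_iff algebra_simps)
qed

lemma LinAH2_lincomb_mem:
  assumes \<phi>: "\<phi> \<in> LinAH2 sA sK bk" and \<phi>': "\<phi>' \<in> LinAH2 sA sK bk"
  shows "(\<lambda>a. hcomb (B2 sK bk) c (\<phi> a) (\<phi>' a)) \<in> LinAH2 sA sK bk"
proof -
  obtain \<psi> \<psi>' where \<psi>: "is_lift sA sK bk \<phi> \<psi>" and \<psi>': "is_lift sA sK bk \<phi>' \<psi>'"
    using lift_exists[OF \<phi>] lift_exists[OF \<phi>'] by blast
  define \<psi>'' where "\<psi>'' = (\<lambda>a x y. c * \<psi> a x y + \<psi>' a x y)"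
  have \<psi>'': "is_lift sA sK bk (\<lambda>a. hcomb (B2 sK bk) c (\<phi> a) (\<phi>' a)) \<psi>''"
    unfolding \<psi>''_def by (rule lift_lincomb[OF \<phi> \<phi>' \<psi> \<psi>'])
  have cls: "hcomb (B2 sK bk) c (\<phi> a) (\<phi>' a) = cls (B2 sK bk) (\<psi>'' a)" for a
    unfolding \<psi>''_def lift_cls[OF \<phi> \<psi>] lift_cls[OF \<phi>' \<psi>'] hcomb_cls[OF form_subspace_B2K] ..
  show ?thesis
    unfolding LinAH2_def cls H2_def
    using lift_Z2[OF \<psi>''] lift_linear_to_Alt2[OF \<psi>''] hcomb_cls[OF form_subspace_B2K]
    by (simp add: linear_to_Alt2_def)
qed

lemma Phi_linear:
  "\<forall>c p p'. p \<in> Phi_domain \<longrightarrow> p' \<in> Phi_domain \<longrightarrow> dcomb sK bk c p p' \<in> Phi_domain \<and>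
    Phi sA sK bk sG bg tm (dcomb sK bk c p p')
      = hcomb (B2 sG bg) c (Phi sA sK bk sG bg tm p) (Phi sA sK bk sG bg tm p')"
proof (intro allI impI)
  fix c p p' assume p: "p \<in> Phi_domain" and p': "p' \<in> Phi_domain"
  obtain \<omega> \<phi> \<omega>' \<phi>' where pp: "p = (\<omega>, \<phi>)" "p' = (\<omega>', \<phi>')"
    and \<omega>: "\<omega> \<in> Alt13 sK bk sG tm" and \<phi>: "\<phi> \<in> LinAH2 sA sK bk"
    and \<omega>': "\<omega>' \<in> Alt13 sK bk sG tm" and \<phi>': "\<phi>' \<in> LinAH2 sA sK bk"
    using p p' by blast
  obtain \<psi> \<psi>' where \<psi>: "is_lift sA sK bk \<phi> \<psi>" and \<psi>': "is_lift sA sK bk \<phi>' \<psi>'"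
    using lift_exists[OF \<phi>] lift_exists[OF \<phi>'] by blast
  have d: "dcomb sK bk c p p'
      = ((\<lambda>X Y. c * \<omega> X Y + \<omega>' X Y), (\<lambda>a. hcomb (B2 sK bk) c (\<phi> a) (\<phi>' a)))"
    unfolding dcomb_def pp by simp
  have "Phi sA sK bk sG bg tm (dcomb sK bk c p p') = cls (B2 sG bg)
      (\<lambda>u v. c * \<omega> (q u) (q v) + \<omega>' (q u) (q v) + fof (\<lambda>a x y. c * \<psi> a x y + \<psi>' a x y) u v)"
    unfolding d by (rule Phi_eq_lift[OF LinAH2_lincomb_mem[OF \<phi> \<phi>'] lift_lincomb[OF \<phi> \<phi>' \<psi> \<psi>']])
  also have "\<dots> = cls (B2 sG bg)
      (\<lambda>u v. c * (\<omega> (q u) (q v) + fof \<psi> u v) + (\<omega>' (q u) (q v) + fof \<psi>' u v))"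
    unfolding fof_lincomb[OF lift_linear_to_Alt2[OF \<psi>] lift_linear_to_Alt2[OF \<psi>']]
    by (simp add: algebra_simps)
  also have "\<dots> = hcomb (B2 sG bg) c (Phi sA sK bk sG bg tm p) (Phi sA sK bk sG bg tm p')"
    unfolding pp Phi_eq_lift[OF \<phi> \<psi>] Phi_eq_lift[OF \<phi>' \<psi>'] hcomb_cls[OF form_subspace_B2G] ..
  finally show "dcomb sK bk c p p' \<in> Phi_domain \<and>
    Phi sA sK bk sG bg tm (dcomb sK bk c p p')
      = hcomb (B2 sG bg) c (Phi sA sK bk sG bg tm p) (Phi sA sK bk sG bg tm p')"
    unfolding d using Alt13_lincomb[OF \<omega> \<omega>'] LinAH2_lincomb_mem[OF \<phi> \<phi>'] by simp
qed

lemma Phi_kernel: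
  assumes \<omega>: "\<omega> \<in> Alt13 sK bk sG tm" and \<psi>: "linear_to_Alt2 \<psi>"
    and B: "(\<lambda>u v. \<omega> (q u) (q v) + fof \<psi> u v) \<in> B2 sG bg"
  shows "\<omega> = (\<lambda>X Y. 0)" and "\<psi> a \<in> B2 sK bk"
proof -
  obtain \<Lambda> where \<Lambda>: "linear_form sG \<Lambda>"
    and E0: "(\<lambda>u v. \<omega> (q u) (q v) + fof \<psi> u v) = (\<lambda>u v. - \<Lambda> (bg u v))"
    using B unfolding B2_def linear_iff_linear_form[OF vector_space_G] by blast
  have E: "\<omega> (q u) (q v) + fof \<psi> u v = - \<Lambda> (bg u v)" for u v
    using fun_cong[OF fun_cong[OF E0, of u], of v] by simp
  have EG: "\<omega> (q (tm a x)) (q (tm b y)) + \<psi> (a * b) x y = - \<Lambda> (tm (a * b) (bk x y))" for a x b y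
    using E[of "tm a x" "tm b y"] unfolding fof_tm[OF \<psi>] bg_tm .
  \<comment> \<open>adding EG at (a x, 1 y) and (1 x, a y) cancels \<omega> by the (1,3)-condition\<close>
  have EP: "\<psi> a x y = - \<Lambda> (tm a (bk x y))" for a x y
  proof (rule double_cancel)
    have "(\<omega> (q (tm a x)) (q (tm 1 y)) + \<omega> (q (tm 1 x)) (q (tm a y))) + 2 * \<psi> a x y
        = (\<omega> (q (tm a x)) (q (tm 1 y)) + \<psi> a x y) + (\<omega> (q (tm 1 x)) (q (tm a y)) + \<psi> a x y)"
      by (simp add: algebra_simps)
    also have "\<dots> = 2 * - \<Lambda> (tm a (bk x y))"
      using EG[of a x 1 y] EG[of 1 x a y] by simp
    finally show "2 * \<psi> a x y = 2 * - \<Lambda> (tm a (bk x y))"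
      unfolding Alt13_13[OF \<omega>] by simp
  qed
  have \<omega>q: "\<omega> (q u) (q v) = 0" for u v
  proof (rule tensor_bilinear_form_eq[OF Alt13_bilinear[OF \<omega>] bilinear_form_zero])
    show "\<omega> (q (tm a x)) (q (tm b y)) = 0" for a x b y using EG[of a x b y] EP[of "a * b" x y] by simp
  qed
  show "\<omega> = (\<lambda>X Y. 0)"
  proof (intro ext)
    fix X Y
    show "\<omega> X Y = 0"
      using \<omega>q Alt13_outside_range[OF \<omega>, of X Y] by (metis rangeE)
  qed
  have "linear_form sK (\<lambda>z. \<Lambda> (tm a z))"
    unfolding linear_form_def using linear_formD[OF \<Lambda>] by simp
  then show "\<psi> a \<in> B2 sK bk"
    unfolding B2_def linear_iff_linear_form[OF vector_space_K] using EP
    by (intro CollectI exI[of _ "\<lambda>z. \<Lambda> (tm a z)"]) (simp add: fun_eq_iff)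
qed

lemma inj_on_Phi: "inj_on (Phi sA sK bk sG bg tm) Phi_domain"
proof (rule inj_onI)
  fix p p' assume p: "p \<in> Phi_domain" and p': "p' \<in> Phi_domain"
    and eq: "Phi sA sK bk sG bg tm p = Phi sA sK bk sG bg tm p'"
  obtain \<omega> \<phi> \<omega>' \<phi>' where pp: "p = (\<omega>, \<phi>)" "p' = (\<omega>', \<phi>')"
    and \<omega>: "\<omega> \<in> Alt13 sK bk sG tm" and \<phi>: "\<phi> \<in> LinAH2 sA sK bk"
    and \<omega>': "\<omega>' \<in> Alt13 sK bk sG tm" and \<phi>': "\<phi>' \<in> LinAH2 sA sK bk"
    using p p' by blast
  obtain \<psi> \<psi>' where \<psi>: "is_lift sA sK bk \<phi> \<psi>" and \<psi>': "is_lift sA sK bk \<phi>' \<psi>'"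
    using lift_exists[OF \<phi>] lift_exists[OF \<phi>'] by blast
  note \<psi>L = lift_linear_to_Alt2[OF \<psi>] and \<psi>'L = lift_linear_to_Alt2[OF \<psi>']
  define \<delta> where "\<delta> = (\<lambda>a x y. (-1) * \<psi>' a x y + \<psi> a x y)"
  have "(\<lambda>u v. (\<omega> (q u) (q v) + fof \<psi> u v) - (\<omega>' (q u) (q v) + fof \<psi>' u v)) \<in> B2 sG bg"
    using eq unfolding pp Phi_eq_lift[OF \<phi> \<psi>] Phi_eq_lift[OF \<phi>' \<psi>']
    by (rule cls_eqD[OF form_subspace_B2G])
  then have "(\<lambda>u v. ((-1) * \<omega>' (q u) (q v) + \<omega> (q u) (q v)) + fof \<delta> u v) \<in> B2 sG bg"
    unfolding \<delta>_def fof_lincomb[OF \<psi>'L \<psi>L] by (simp add: algebra_simps)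
  note kernel = Phi_kernel[OF Alt13_lincomb[OF \<omega>' \<omega>, of "-1"]
      linear_to_Alt2_lincomb[OF \<psi>'L \<psi>L, of "-1"], folded \<delta>_def, OF this]
  have "\<omega> = \<omega>'"
  proof (intro ext)
    fix X Y show "\<omega> X Y = \<omega>' X Y" using fun_cong[OF fun_cong[OF kernel(1), of X], of Y] by simp
  qed
  moreover have "\<phi> = \<phi>'"
  proof (intro ext)
    fix a
    have "(\<lambda>x y. \<psi> a x y - \<psi>' a x y) \<in> B2 sK bk" using kernel(2)[of a] unfolding \<delta>_def by simp
    then show "\<phi> a = \<phi>' a"
      unfolding lift_cls[OF \<phi> \<psi>] lift_cls[OF \<phi>' \<psi>'] by (rule cls_eqI[OF form_subspace_B2K])
  qed
  ultimately show "p = p'" unfolding pp by simp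
qed

section \<open>The image of \<open>\<Phi>\<close>\<close>

lemma Phi_comp1_vanishes:
  assumes \<omega>: "\<omega> \<in> Alt13 sK bk sG tm" and \<phi>: "\<phi> \<in> LinAH2 sA sK bk"
  shows "\<exists>f. Phi sA sK bk sG bg tm (\<omega>, \<phi>) = cls (B2 sG bg) f \<and> f \<in> Z2 sG bg \<and>
      (\<forall>u v. v \<in> gp \<longrightarrow> comp1 sA sK sG tm f u v = 0)"
proof -
  obtain \<psi> where \<psi>: "is_lift sA sK bk \<phi> \<psi>" using lift_exists[OF \<phi>] by blast
  note \<psi>L = lift_linear_to_Alt2[OF \<psi>]
  define f where "f u v = \<omega> (q u) (q v) + fof \<psi> u v" for u v
  have fZ: "f \<in> Z2 sG bg"
    using Z2_lincomb[OF vector_space_G Alt13_Z2[OF \<omega>] fof_Z2[OF \<psi>L lift_Z2[OF \<psi>]], of 1]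
    unfolding f_def by simp
  then have f: "altform sG f" unfolding Z2_def by simp
  note c1 = comp1_tensor[OF f]
  have "comp1 sA sK sG tm f u v = 0" if v: "v \<in> gp" for u v
  proof (rule linear_form_vanishes_on_gprime[OF bilinear_form_linear_right[OF c1(1)] _ v])
    fix a y z
    show "comp1 sA sK sG tm f u (tm a (bk y z)) = 0"
    proof (rule tensor_linear_form_eq_zero[OF bilinear_form_linear_left[OF c1(1)]])
      fix b x
      \<comment> \<open>\<omega> vanishes on g', and \<psi>(ba) is skew\<close>
      have "f (tm b x) (tm a (bk y z)) + f (tm b (bk y z)) (tm a x)
          = \<psi> (b * a) x (bk y z) + \<psi> (b * a) (bk y z) x"
        unfolding f_def fof_tm[OF \<psi>L] using Alt13_gprime_zero[OF \<omega> tm_bracket_in_gprime] by simp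
      also have "\<dots> = 0"
        using altform_skew[OF vector_space_K linear_to_Alt2_altform[OF \<psi>L], of "b * a" x "bk y z"]
        by simp
      finally have "2 * comp1 sA sK sG tm f (tm b x) (tm a (bk y z)) = 2 * 0"
        unfolding c1(2) by simp
      then show "comp1 sA sK sG tm f (tm b x) (tm a (bk y z)) = 0" by (rule double_cancel)
    qed
  qed
  then show ?thesis using fZ unfolding Phi_eq_lift[OF \<phi> \<psi>] f_def by blast
qed

end

text \<open>If \<open>comp1 f\<close> vanishes on \<open>g \<times> g'\<close>, then so does \<open>f - f_of sG tm (comp2_coeff f)\<close>,
  which therefore descends to a form \<open>omega\<close> on \<open>g/g'\<close>.\<close>

locale comp1_vanishing_cocycle = current_algebra sA sK bk sG bg tm
  for sA :: "'k::field \<Rightarrow> 'a::comm_ring_1 \<Rightarrow> 'a"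
    and sK :: "'k \<Rightarrow> 'b::ab_group_add \<Rightarrow> 'b" and bk :: "'b \<Rightarrow> 'b \<Rightarrow> 'b"
    and sG :: "'k \<Rightarrow> 'g::ab_group_add \<Rightarrow> 'g" and bg :: "'g \<Rightarrow> 'g \<Rightarrow> 'g"
    and tm :: "'a \<Rightarrow> 'b \<Rightarrow> 'g" +
  fixes f :: "'g \<Rightarrow> 'g \<Rightarrow> 'k"
  assumes f_Z2: "f \<in> Z2 sG bg"
    and comp1_vanishes: "\<And>u v. v \<in> gprime sK bk sG tm \<Longrightarrow> comp1 sA sK sG tm f u v = 0"
begin

lemma f_altform: "altform sG f"
  using f_Z2 unfolding Z2_def by simp

lemma f_bilinear: "bilinear_form sG f"
  by (rule altform_bilinear_form[OF vector_space_G f_altform])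

lemma f_skew: "f u v = - f v u"
  by (rule altform_skew[OF vector_space_G f_altform])

lemma f_bracket_swap: "f (tm a (bk y z)) (tm b x) = - f (tm a x) (tm b (bk y z))"
proof -
  have "f (tm a x) (tm b (bk y z)) + f (tm a (bk y z)) (tm b x)
      = 2 * comp1 sA sK sG tm f (tm a x) (tm b (bk y z))"
    by (rule comp1_tensor(2)[OF f_altform, symmetric])
  also have "\<dots> = 0" using comp1_vanishes[OF tm_bracket_in_gprime] by simp
  finally show ?thesis by (simp add: eq_neg_iff_add_eq_0 add.commute)
qed

lemma f_bracket_symmetric: "f (tm b x) (tm a (bk y z)) = f (tm a x) (tm b (bk y z))"
  using f_skew[of "tm b x"] f_bracket_swap[of a y z b x] by simp

lemma f_cocycle_tm:
  "f (tm (a * b) (bk x y)) (tm c z) + f (tm (b * c) (bk y z)) (tm a x)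
     + f (tm (c * a) (bk z x)) (tm b y) = 0"
proof -
  have "f (bg (tm a x) (tm b y)) (tm c z) + f (bg (tm b y) (tm c z)) (tm a x)
      + f (bg (tm c z) (tm a x)) (tm b y) = 0"
    using f_Z2 unfolding Z2_def by blast
  then show ?thesis by (simp only: bg_tm)
qed

lemma f_bracket_cyclic:
  "f (tm c z) (tm 1 (bk x y)) + f (tm c x) (tm 1 (bk y z)) + f (tm c y) (tm 1 (bk z x)) = 0"
proof -
  have "f (tm c z) (tm 1 (bk x y)) + f (tm c x) (tm 1 (bk y z)) + f (tm c y) (tm 1 (bk z x))
      = - (f (tm 1 (bk x y)) (tm c z) + f (tm c (bk y z)) (tm 1 x) + f (tm c (bk z x)) (tm 1 y))"
    using f_bracket_swap[of 1 x y c z] f_bracket_symmetric[of 1 z c x y]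
      f_bracket_swap[of c y z 1 x] f_bracket_swap[of c z x 1 y] by simp
  also have "\<dots> = 0" using f_cocycle_tm[of 1 1 x y c z] by simp
  finally show ?thesis .
qed

lemma f_bracket_mult: "f (tm a x) (tm c (bk y z)) = f (tm (a * c) x) (tm 1 (bk y z))"
proof -
  have E1: "f (tm a z) (tm c (bk x y)) + f (tm a x) (tm c (bk y z)) + f (tm (a * c) y) (tm 1 (bk z x))
      = 0" for x y z
  proof -
    have "f (tm a z) (tm c (bk x y)) + f (tm a x) (tm c (bk y z)) + f (tm (a * c) y) (tm 1 (bk z x))
      = - (f (tm (a * 1) (bk x y)) (tm c z) + f (tm (1 * c) (bk y z)) (tm a x)
          + f (tm (c * a) (bk z x)) (tm 1 y))"
      using f_bracket_swap[of a x y c z] f_bracket_swap[of c y z a x] f_bracket_symmetric[of c x a y z]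
        f_bracket_swap[of "c * a" z x 1 y] by (simp add: mult.commute[of c a])
    also have "\<dots> = 0" using f_cocycle_tm[of a 1 x y c z] by simp
    finally show ?thesis .
  qed
  define \<mu> where "\<mu> x y z = f (tm a x) (tm c (bk y z)) - f (tm (a * c) x) (tm 1 (bk y z))" for x y z
  have M: "\<mu> z x y + \<mu> x y z = 0" for x y z
  proof -
    have "\<mu> z x y + \<mu> x y z
      = (f (tm a z) (tm c (bk x y)) + f (tm a x) (tm c (bk y z)) + f (tm (a * c) y) (tm 1 (bk z x)))
        - (f (tm (a * c) z) (tm 1 (bk x y)) + f (tm (a * c) x) (tm 1 (bk y z))
          + f (tm (a * c) y) (tm 1 (bk z x)))"
      unfolding \<mu>_def by (simp add: algebra_simps)
    then show ?thesis unfolding E1 f_bracket_cyclic by simp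
  qed
  \<comment> \<open>\<mu> changes sign under a cyclic shift of its arguments, so three shifts give \<mu> = - \<mu>\<close>
  have "2 * \<mu> x y z = (\<mu> z x y + \<mu> x y z) + (\<mu> x y z + \<mu> y z x) - (\<mu> y z x + \<mu> z x y)"
    by (simp only: mult_2) (simp add: algebra_simps)
  also have "\<dots> = 2 * 0" using M[of x y z] M[of y z x] M[of z x y] by simp
  finally have "\<mu> x y z = 0" by (rule double_cancel)
  then show ?thesis unfolding \<mu>_def by simp
qed

abbreviation "h \<equiv> comp2_coeff f"

lemma h_linear_to_Alt2: "linear_to_Alt2 h"
  by (rule linear_to_Alt2_comp2_coeff[OF f_bilinear])

lemma h_bracket_left: "h c (bk x y) z = - f (tm c z) (tm 1 (bk x y))"
proof (rule double_cancel)
  show "2 * h c (bk x y) z = 2 * - f (tm c z) (tm 1 (bk x y))"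
    unfolding comp2_coeff_def comp3_coeff_def double_half f_bracket_swap by simp
qed

lemma h_bracket_right: "h c x (bk y z) = f (tm c x) (tm 1 (bk y z))"
proof (rule double_cancel)
  show "2 * h c x (bk y z) = 2 * f (tm c x) (tm 1 (bk y z))"
    unfolding comp2_coeff_def comp3_coeff_def double_half f_bracket_swap by simp
qed

lemma h_Z2: "h c \<in> Z2 sK bk"
proof -
  have "h c (bk x y) z + h c (bk y z) x + h c (bk z x) y = 0" for x y z
  proof -
    have "h c (bk x y) z + h c (bk y z) x + h c (bk z x) y
        = - (f (tm c z) (tm 1 (bk x y)) + f (tm c x) (tm 1 (bk y z)) + f (tm c y) (tm 1 (bk z x)))"
      unfolding h_bracket_left by simp
    then show ?thesis unfolding f_bracket_cyclic by simp
  qed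
  then show ?thesis
    unfolding Z2_def using linear_to_Alt2_altform[OF h_linear_to_Alt2] by simp
qed

definition omega_form :: "'g \<Rightarrow> 'g \<Rightarrow> 'k" where
  "omega_form u v = f u v - fof h u v"

lemma omega_form_bilinear: "bilinear_form sG omega_form"
  using bilinear_form_lincomb[OF f_bilinear fof_bilinear[OF h_linear_to_Alt2], of 1 "-1"]
  unfolding omega_form_def[abs_def] by simp

lemma omega_form_altform: "altform sG omega_form"
proof -
  have "omega_form u u = 0" for u
    using f_altform fof_altform[OF h_linear_to_Alt2] unfolding omega_form_def altform_def by simp
  then show ?thesis
    using omega_form_bilinear unfolding altform_def bilin_iff_bilinear_form[OF vector_space_G] by simp
qed

lemma omega_form_gprime_right:
  assumes v: "v \<in> gp"
  shows "omega_form u v = 0"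
proof (rule linear_form_vanishes_on_gprime[OF bilinear_form_linear_right[OF omega_form_bilinear] _ v])
  fix b y z
  show "omega_form u (tm b (bk y z)) = 0"
  proof (rule tensor_linear_form_eq_zero[OF bilinear_form_linear_left[OF omega_form_bilinear]])
    fix a x
    show "omega_form (tm a x) (tm b (bk y z)) = 0"
      unfolding omega_form_def fof_tm[OF h_linear_to_Alt2] h_bracket_right f_bracket_mult[of a x b]
      by simp
  qed
qed

lemma omega_form_q:
  assumes "q u = q u'" "q v = q v'"
  shows "omega_form u v = omega_form u' v'"
proof -
  have "u - u' \<in> gp" "v - v' \<in> gp" using assms q_eq_iff by blast+
  then have "omega_form (u - u') v = 0" "omega_form u' (v - v') = 0"
    using omega_form_gprime_right altform_skew[OF vector_space_G omega_form_altform, of "u - u'" v]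
    by simp_all
  then show ?thesis
    using linear_form_diff[OF vector_space_G bilinear_form_linear_left[OF omega_form_bilinear]]
      linear_form_diff[OF vector_space_G bilinear_form_linear_right[OF omega_form_bilinear]]
    by simp
qed

definition omega :: "'g set \<Rightarrow> 'g set \<Rightarrow> 'k" where
  "omega X Y = (if X \<in> range q \<and> Y \<in> range q
     then omega_form (SOME u. q u = X) (SOME v. q v = Y) else 0)"

lemma omega_q: "omega (q u) (q v) = omega_form u v"
proof -
  define u\<^sub>0 where "u\<^sub>0 = (SOME u'. q u' = q u)"
  define v\<^sub>0 where "v\<^sub>0 = (SOME v'. q v' = q v)"
  have "q u\<^sub>0 = q u" "q v\<^sub>0 = q v"
    unfolding u\<^sub>0_def v\<^sub>0_def by (rule someI_ex, blast)+
  then have "omega_form u\<^sub>0 v\<^sub>0 = omega_form u v" by (rule omega_form_q)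
  then show ?thesis unfolding omega_def u\<^sub>0_def v\<^sub>0_def by simp
qed

lemma omega_Alt13: "omega \<in> Alt13 sK bk sG tm"
proof -
  have "omega_form (tm a x) (tm 1 y) + omega_form (tm 1 x) (tm a y) = 0" for a x y
  proof -
    have "omega_form (tm a x) (tm 1 y) + omega_form (tm 1 x) (tm a y)
        = (f (tm a x) (tm 1 y) - f (tm a y) (tm 1 x)) - 2 * h a x y"
      unfolding omega_form_def fof_tm[OF h_linear_to_Alt2] f_skew[of "tm 1 x"] by simp
    then show ?thesis unfolding comp2_coeff_def comp3_coeff_def double_half by simp
  qed
  moreover have "omega X Y = 0" if "X \<notin> range q \<or> Y \<notin> range q" for X Y
    using that unfolding omega_def by auto
  moreover have "omega_form u u = 0" for u
    using omega_form_altform unfolding altform_def by simp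
  ultimately show ?thesis unfolding Alt13_def Let_def
    by (simp add: omega_q bilinear_form_left[OF omega_form_bilinear]
        bilinear_form_right[OF omega_form_bilinear])
qed

lemma cocycle_in_Phi_image:
  "\<exists>\<omega> \<phi>. \<omega> \<in> Alt13 sK bk sG tm \<and> \<phi> \<in> LinAH2 sA sK bk \<and>
     Phi sA sK bk sG bg tm (\<omega>, \<phi>) = cls (B2 sG bg) f"
proof -
  define \<phi> where "\<phi> a = cls (B2 sK bk) (h a)" for a
  have h_lincomb: "h (sA c a + a') = (\<lambda>x y. c * h a x y + h a' x y)" for c a a'
    using h_linear_to_Alt2 unfolding linear_to_Alt2_def by blast
  have \<phi>: "\<phi> \<in> LinAH2 sA sK bk"
    unfolding LinAH2_def \<phi>_def H2_def using h_Z2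
    by (simp add: hcomb_cls[OF form_subspace_B2K] h_lincomb)
  have lift: "is_lift sA sK bk \<phi> h"
    unfolding is_lift_def \<phi>_def using h_Z2 mem_cls_self[OF form_subspace_B2K]
    by (simp add: h_lincomb)
  have "Phi sA sK bk sG bg tm (omega, \<phi>) = cls (B2 sG bg) f"
    unfolding Phi_eq_lift[OF \<phi> lift] omega_q omega_form_def by simp
  then show ?thesis using omega_Alt13 \<phi> by blast
qed

end

context current_algebra
begin

lemma Phi_image:
  "Phi sA sK bk sG bg tm ` Phi_domain = {cls (B2 sG bg) f | f. f \<in> Z2 sG bg \<and>
     (\<forall>u v. v \<in> gp \<longrightarrow> comp1 sA sK sG tm f u v = 0)}"
proof (intro set_eqI iffI)
  fix X assume "X \<in> Phi sA sK bk sG bg tm ` Phi_domain"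
  then obtain \<omega> \<phi> where "\<omega> \<in> Alt13 sK bk sG tm" "\<phi> \<in> LinAH2 sA sK bk"
    and X: "X = Phi sA sK bk sG bg tm (\<omega>, \<phi>)" by blast
  then show "X \<in> {cls (B2 sG bg) f | f. f \<in> Z2 sG bg \<and>
      (\<forall>u v. v \<in> gp \<longrightarrow> comp1 sA sK sG tm f u v = 0)}"
    using Phi_comp1_vanishes by blast
next
  fix X assume "X \<in> {cls (B2 sG bg) f | f. f \<in> Z2 sG bg \<and>
      (\<forall>u v. v \<in> gp \<longrightarrow> comp1 sA sK sG tm f u v = 0)}"
  then obtain f where X: "X = cls (B2 sG bg) f"
    and "comp1_vanishing_cocycle sA sK bk sG bg tm f"
    using comp1_vanishing_cocycle.intro[OF current_algebra_axioms comp1_vanishing_cocycle_axioms.intro]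
    by blast
  then show "X \<in> Phi sA sK bk sG bg tm ` Phi_domain"
    using comp1_vanishing_cocycle.cocycle_in_Phi_image by force
qed

end

theorem lemma4p1:
  fixes sA :: "'k::field \<Rightarrow> 'a::comm_ring_1 \<Rightarrow> 'a"
    and sK :: "'k \<Rightarrow> 'b::ab_group_add \<Rightarrow> 'b" and bk :: "'b \<Rightarrow> 'b \<Rightarrow> 'b"
    and sG :: "'k \<Rightarrow> 'g::ab_group_add \<Rightarrow> 'g" and bg :: "'g \<Rightarrow> 'g \<Rightarrow> 'g"
    and tm :: "'a \<Rightarrow> 'b \<Rightarrow> 'g"
  assumes two: "(2::'k) \<noteq> 0"
    and A: "comm_algebra sA"
    and K: "lie_algebra sK bk"
    and G: "is_tensor_product sA sK sG tm"
    and bg_bilin: "bilin sG sG sG bg"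
    and bg_tm: "\<And>a x b y. bg (tm a x) (tm b y) = tm (a * b) (bk x y)"
  defines "D \<equiv> {(\<omega>, \<phi>). \<omega> \<in> Alt13 sK bk sG tm \<and> \<phi> \<in> LinAH2 sA sK bk}"
    and "q \<equiv> qmap (gprime sK bk sG tm)"
    and "\<Phi> \<equiv> Phi sA sK bk sG bg tm"
  shows
    \<comment> \<open>well-defined\<close>
    "(\<forall>\<omega> \<phi>. (\<omega>, \<phi>) \<in> D \<longrightarrow>
        (\<exists>\<psi>. is_lift sA sK bk \<phi> \<psi>) \<and>
        (\<lambda>u v. \<omega> (q u) (q v)) \<in> Z2 sG bg \<and>
        (\<forall>\<psi>. is_lift sA sK bk \<phi> \<psi> \<longrightarrow>
           bilin sG sG (*) (f_of sG tm \<psi>) \<and>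
           (\<forall>a x b y. f_of sG tm \<psi> (tm a x) (tm b y) = \<psi> (a * b) x y) \<and>
           f_of sG tm \<psi> \<in> Z2 sG bg \<and>
           \<Phi> (\<omega>, \<phi>) = cls (B2 sG bg) (\<lambda>u v. \<omega> (q u) (q v) + f_of sG tm \<psi> u v)) \<and>
        \<Phi> (\<omega>, \<phi>) \<in> H2 sG bg)
     \<comment> \<open>linear\<close>
     \<and> (\<forall>c p p'. p \<in> D \<longrightarrow> p' \<in> D \<longrightarrow>
          dcomb sK bk c p p' \<in> D \<and>
          \<Phi> (dcomb sK bk c p p') = hcomb (B2 sG bg) c (\<Phi> p) (\<Phi> p'))
     \<comment> \<open>injective\<close>
     \<and> inj_on \<Phi> D
     \<comment> \<open>image\<close>
     \<and> \<Phi> ` D = {cls (B2 sG bg) f | f. f \<in> Z2 sG bg \<and>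
                   (\<forall>u v. v \<in> gprime sK bk sG tm \<longrightarrow> comp1 sA sK sG tm f u v = 0)}"
proof -
  interpret current_algebra sA sK bk sG bg tm
    using two A K G bg_bilin bg_tm by (rule current_algebra.intro)
  show ?thesis
    unfolding D_def q_def \<Phi>_def
    by (intro conjI Phi_well_defined Phi_linear inj_on_Phi Phi_image)
qed

end
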